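(* Let $R$ be a commutative noetherian local ring containing $\mathbf{Z}_p$ as a subring, let $A=R/pR$ with maximal ideal $\mathfrak{m}$, and let $(n_i(A))_{i\ge1}$ be the non-decreasing sequence of integers in which each integer $k\ge0$ occurs exactly $\dim_{A/\mathfrak{m}}\mathfrak{m}^k/\mathfrak{m}^{k+1}$ times. Let $r_1,\dots,r_s\in R$ and let $\phi_1,\dots,\phi_s:R\to\mathbf{Z}_p$ be ring homomorphisms. Then the determinant of the $s\times s$ matrix $(\phi_i(r_j))$ is divisible by $p^{A(s)}$, where $A(s)=n_1(A)+n_2(A)+\dots+n_s(A)$. *)

theory Defs
  imports "HOL-Computational_Algebra.Primes" "HOL-Algebra.Ring_Divisibility" "HOL-Algebra.Ideal_Product" "HOL-Algebra.QuotRing" "HOL-Combinatorics.Permutations"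
begin

text \<open>Z_p realised as the inverse limit of the rings Z/p^n Z: an element is a
  compatible sequence of residues x n in {0..<p^n}.\<close>

definition Zp :: "int \<Rightarrow> (nat \<Rightarrow> int) ring" where
  "Zp p = \<lparr> carrier = {x. (\<forall>n. 0 \<le> x n \<and> x n < p ^ n) \<and> (\<forall>n. x (Suc n) mod p ^ n = x n)},
            mult = (\<lambda>x y n. (x n * y n) mod p ^ n),
            one = (\<lambda>n. 1 mod p ^ n),
            zero = (\<lambda>n. 0),
            add = (\<lambda>x y n. (x n + y n) mod p ^ n) \<rparr>"

definition Zp_p :: "int \<Rightarrow> nat \<Rightarrow> int" where
  "Zp_p p = (\<lambda>n. p mod p ^ n)"

definition local_ring :: "('a, 'b) ring_scheme \<Rightarrow> bool" where
  "local_ring R \<longleftrightarrow> cring R \<and> (\<exists>!M. maximalideal M R)"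

definition max_ideal :: "('a, 'b) ring_scheme \<Rightarrow> 'a set" where
  "max_ideal R = (THE M. maximalideal M R)"

definition ideal_power :: "('a, 'b) ring_scheme \<Rightarrow> 'a set \<Rightarrow> nat \<Rightarrow> 'a set" where
  "ideal_power R I k = I [^]\<^bsub>ideals_set R\<^esub> k"

text \<open>S is a set of representatives in m^k of a basis of the (A/m)-vector space
  m^k/m^(k+1): linear independence and spanning modulo m^(k+1), with scalars in A
  taken modulo m.\<close>
definition graded_basis :: "('a, 'b) ring_scheme \<Rightarrow> 'a set \<Rightarrow> nat \<Rightarrow> 'a set \<Rightarrow> bool" where
  "graded_basis A M k S \<longleftrightarrow>
     finite S \<and> S \<subseteq> ideal_power A M k \<and>
     (\<forall>a \<in> S \<rightarrow> carrier A.
        (\<Oplus>\<^bsub>A\<^esub> s\<in>S. a s \<otimes>\<^bsub>A\<^esub> s) \<in> ideal_power A M (Suc k) \<longrightarrow> (\<forall>s\<in>S. a s \<in> M)) \<and>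
     (\<forall>x \<in> ideal_power A M k. \<exists>a \<in> S \<rightarrow> carrier A.
        x \<ominus>\<^bsub>A\<^esub> (\<Oplus>\<^bsub>A\<^esub> s\<in>S. a s \<otimes>\<^bsub>A\<^esub> s) \<in> ideal_power A M (Suc k))"

definition graded_dim :: "('a, 'b) ring_scheme \<Rightarrow> nat \<Rightarrow> nat" where
  "graded_dim A k = card (SOME S. graded_basis A (max_ideal A) k S)"

text \<open>n_i(A) (i \<ge> 1): the non-decreasing sequence in which k occurs graded_dim A k times.\<close>
definition n_seq :: "('a, 'b) ring_scheme \<Rightarrow> nat \<Rightarrow> nat" where
  "n_seq A i = (LEAST k. i \<le> (\<Sum>j\<le>k. graded_dim A j))"

definition n_seq_has :: "('a, 'b) ring_scheme \<Rightarrow> nat \<Rightarrow> bool" where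
  "n_seq_has A s \<longleftrightarrow> (\<exists>k. s \<le> (\<Sum>j\<le>k. graded_dim A j))"

definition A_sum :: "('a, 'b) ring_scheme \<Rightarrow> nat \<Rightarrow> nat" where
  "A_sum A s = (\<Sum>i=1..s. n_seq A i)"

definition ring_det :: "('c, 'd) ring_scheme \<Rightarrow> nat \<Rightarrow> (nat \<Rightarrow> nat \<Rightarrow> 'c) \<Rightarrow> 'c" where
  "ring_det K s M =
     (\<Oplus>\<^bsub>K\<^esub> \<sigma> \<in> {\<sigma>. \<sigma> permutes {0..<s}}.
        (if sign \<sigma> = (1::int) then \<one>\<^bsub>K\<^esub> else \<ominus>\<^bsub>K\<^esub> \<one>\<^bsub>K\<^esub>) \<otimes>\<^bsub>K\<^esub>
        (\<Otimes>\<^bsub>K\<^esub> i \<in> {0..<s}. M i (\<sigma> i)))"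

end

theory Submission
  imports Defs Jordan_Normal_Form.Determinant
begin

(* Put K = A(s) and work modulo p^K. Let m be the maximal ideal of A = R/pR and choose, for
   every k < K, lifts L(k,e) in R of a basis of m^k/m^(k+1) whose images under all phi_i vanish
   modulo p^k; this is possible because m^k is the image of the ideal of such elements.
   Successive approximation along the m-adic filtration shows that every x in R is, up to a
   multiple of p, a combination of the L(k,e) with coefficients on which all phi_i agree
   (residues of R are represented by integers); iterating K times, the remaining multiple of p^K
   vanishes modulo p^K. Hence modulo p^K every column (phi_i(r_j))_i of the matrix is an integer
   combination of the vectors (phi_i(L(k,e)))_i, which are divisible by p^k. Expanding the
   determinant multilinearly, every nonzero term involves s distinct lifts, at most
   dim m^k/m^(k+1) of them of level k, and is therefore divisible by p^(n_1 + ... + n_s). *)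

(* Jordan_Normal_Form's Ring_Hom.ring_hom would otherwise shadow the ring_hom of HOL-Algebra. *)
hide_const (open) Ring_Hom.ring_hom

section \<open>Arithmetic in Z_p\<close>

locale padic =
  fixes p :: int
  assumes p_ge_2: "2 \<le> p"
begin

lemma p_pow_pos [simp]: "0 < p ^ n"
  using p_ge_2 by simp

lemma Zp_carrier_iff:
  "x \<in> carrier (Zp p) \<longleftrightarrow> (\<forall>n. 0 \<le> x n \<and> x n < p ^ n) \<and> (\<forall>n. x (Suc n) mod p ^ n = x n)"
  by (simp add: Zp_def)

lemma Zp_apply_bounds: "x \<in> carrier (Zp p) \<Longrightarrow> 0 \<le> x n \<and> x n < p ^ n"
  by (simp add: Zp_def)

lemma Zp_apply_mod: "x \<in> carrier (Zp p) \<Longrightarrow> x n mod p ^ n = x n"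
  using Zp_apply_bounds[of x n] by simp

lemma Zp_apply_Suc_mod: "x \<in> carrier (Zp p) \<Longrightarrow> x (Suc n) mod p ^ n = x n"
  by (simp add: Zp_def)

lemma Zp_apply_mod_le:
  assumes x: "x \<in> carrier (Zp p)" and "m \<le> n"
  shows "x n mod p ^ m = x m"
  using assms(2)
proof (induction n rule: dec_induct)
  case base
  show ?case using Zp_apply_mod[OF x] .
next
  case (step n)
  have "x (Suc n) mod p ^ m = x (Suc n) mod p ^ n mod p ^ m"
    using \<open>m \<le> n\<close> by (simp add: le_imp_power_dvd mod_mod_cancel)
  also have "x (Suc n) mod p ^ n = x n"
    using Zp_apply_Suc_mod[OF x] .
  finally show ?case using step.IH by simp
qed

lemma Zp_add_apply [simp]: "(x \<oplus>\<^bsub>Zp p\<^esub> y) n = (x n + y n) mod p ^ n"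
  and Zp_mult_apply [simp]: "(x \<otimes>\<^bsub>Zp p\<^esub> y) n = (x n * y n) mod p ^ n"
  and Zp_one_apply [simp]: "\<one>\<^bsub>Zp p\<^esub> n = 1 mod p ^ n"
  and Zp_zero_apply [simp]: "\<zero>\<^bsub>Zp p\<^esub> n = 0"
  by (simp_all add: Zp_def)

lemma Zp_reduce_closed:
  assumes "\<And>n. f (Suc n) mod p ^ n = f n mod p ^ n"
  shows "(\<lambda>n. f n mod p ^ n) \<in> carrier (Zp p)"
  unfolding Zp_carrier_iff
  using assms by (simp add: le_imp_power_dvd mod_mod_cancel)

lemma Zp_add_closed: "x \<in> carrier (Zp p) \<Longrightarrow> y \<in> carrier (Zp p) \<Longrightarrow> x \<oplus>\<^bsub>Zp p\<^esub> y \<in> carrier (Zp p)"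
  using Zp_reduce_closed[of "\<lambda>n. x n + y n"] by (simp add: Zp_def) (metis mod_add_eq Zp_apply_Suc_mod)

lemma Zp_mult_closed: "x \<in> carrier (Zp p) \<Longrightarrow> y \<in> carrier (Zp p) \<Longrightarrow> x \<otimes>\<^bsub>Zp p\<^esub> y \<in> carrier (Zp p)"
  using Zp_reduce_closed[of "\<lambda>n. x n * y n"] by (simp add: Zp_def) (metis mod_mult_eq Zp_apply_Suc_mod)

lemma Zp_neg_closed: "x \<in> carrier (Zp p) \<Longrightarrow> (\<lambda>n. (- x n) mod p ^ n) \<in> carrier (Zp p)"
  using Zp_reduce_closed[of "\<lambda>n. - x n"] by (metis mod_minus_eq Zp_apply_Suc_mod)

lemma Zp_cring: "cring (Zp p)"
proof (rule cringI)
  let ?Zp = "Zp p"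
  show "abelian_group ?Zp"
  proof (rule abelian_groupI)
    fix x y z assume x: "x \<in> carrier ?Zp" and "y \<in> carrier ?Zp" "z \<in> carrier ?Zp"
    show "x \<oplus>\<^bsub>?Zp\<^esub> y \<oplus>\<^bsub>?Zp\<^esub> z = x \<oplus>\<^bsub>?Zp\<^esub> (y \<oplus>\<^bsub>?Zp\<^esub> z)"
      by (rule ext) (simp add: mod_add_left_eq mod_add_right_eq add.assoc)
    show "x \<oplus>\<^bsub>?Zp\<^esub> y = y \<oplus>\<^bsub>?Zp\<^esub> x"
      by (rule ext) (simp add: add.commute)
    show "\<zero>\<^bsub>?Zp\<^esub> \<oplus>\<^bsub>?Zp\<^esub> x = x"
      by (rule ext) (simp add: Zp_apply_mod[OF x])
    have "(\<lambda>n. (- x n) mod p ^ n) \<oplus>\<^bsub>?Zp\<^esub> x = \<zero>\<^bsub>?Zp\<^esub>"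
      by (rule ext) (simp add: mod_add_left_eq)
    then show "\<exists>y\<in>carrier ?Zp. y \<oplus>\<^bsub>?Zp\<^esub> x = \<zero>\<^bsub>?Zp\<^esub>"
      using Zp_neg_closed[OF x] by blast
  qed (auto simp: Zp_add_closed, simp add: Zp_def)
next
  show "comm_monoid (Zp p)"
  proof (rule comm_monoidI)
    fix x y z assume x: "x \<in> carrier (Zp p)" and "y \<in> carrier (Zp p)" "z \<in> carrier (Zp p)"
    show "x \<otimes>\<^bsub>Zp p\<^esub> y \<otimes>\<^bsub>Zp p\<^esub> z = x \<otimes>\<^bsub>Zp p\<^esub> (y \<otimes>\<^bsub>Zp p\<^esub> z)"
      by (rule ext) (simp add: mod_mult_left_eq mod_mult_right_eq mult.assoc)
    show "x \<otimes>\<^bsub>Zp p\<^esub> y = y \<otimes>\<^bsub>Zp p\<^esub> x"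
      by (rule ext) (simp add: mult.commute)
    show "\<one>\<^bsub>Zp p\<^esub> \<otimes>\<^bsub>Zp p\<^esub> x = x"
      by (rule ext) (simp add: mod_mult_left_eq Zp_apply_mod[OF x])
  next
    show "\<one>\<^bsub>Zp p\<^esub> \<in> carrier (Zp p)"
      using Zp_reduce_closed[of "\<lambda>n. 1"] by (simp add: Zp_def)
  qed (simp add: Zp_mult_closed)
next
  fix x y z
  show "(x \<oplus>\<^bsub>Zp p\<^esub> y) \<otimes>\<^bsub>Zp p\<^esub> z = x \<otimes>\<^bsub>Zp p\<^esub> z \<oplus>\<^bsub>Zp p\<^esub> y \<otimes>\<^bsub>Zp p\<^esub> z"
    by (rule ext) (simp add: mod_mult_left_eq mod_add_eq distrib_right)
qed

sublocale Zp: cring "Zp p"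
  by (rule Zp_cring)

lemma Zp_a_inv_apply:
  assumes "x \<in> carrier (Zp p)"
  shows "(\<ominus>\<^bsub>Zp p\<^esub> x) n = (- x n) mod p ^ n"
proof -
  have "(\<lambda>n. (- x n) mod p ^ n) \<oplus>\<^bsub>Zp p\<^esub> x = \<zero>\<^bsub>Zp p\<^esub>"
    by (rule ext) (simp add: mod_add_left_eq)
  then have "\<ominus>\<^bsub>Zp p\<^esub> x = (\<lambda>n. (- x n) mod p ^ n)"
    using Zp.minus_equality[OF _ assms Zp_neg_closed[OF assms]] by simp
  then show ?thesis
    by simp
qed

lemma Zp_finsum_apply:
  assumes "finite B" "f \<in> B \<rightarrow> carrier (Zp p)"
  shows "(\<Oplus>\<^bsub>Zp p\<^esub> b\<in>B. f b) n = (\<Sum>b\<in>B. f b n) mod p ^ n"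
  using assms
proof (induction B rule: finite_induct)
  case (insert x F)
  then show ?case by (simp add: mod_add_right_eq)
qed simp

lemma Zp_finprod_apply:
  assumes "finite B" "f \<in> B \<rightarrow> carrier (Zp p)"
  shows "(\<Otimes>\<^bsub>Zp p\<^esub> b\<in>B. f b) n = (\<Prod>b\<in>B. f b n) mod p ^ n"
  using assms
proof (induction B rule: finite_induct)
  case (insert x F)
  then show ?case by (simp add: mod_mult_right_eq)
qed simp

lemma Zp_nat_pow_apply: "(x [^]\<^bsub>Zp p\<^esub> (k::nat)) n = x n ^ k mod p ^ n"
  by (induction k) (simp_all add: mod_mult_left_eq power_Suc2 del: power_Suc)

lemma Zp_add_pow_one_apply: "add_pow (Zp p) k \<one>\<^bsub>Zp p\<^esub> n = int k mod p ^ n"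
  by (induction k) (simp_all add: mod_add_eq add.commute)

lemma Zp_p_eq_add_pow_one: "Zp_p p = add_pow (Zp p) (nat p) \<one>\<^bsub>Zp p\<^esub>"
  using p_ge_2 by (intro ext) (simp add: Zp_add_pow_one_apply Zp_p_def)

lemma Zp_p_closed: "Zp_p p \<in> carrier (Zp p)"
  by (simp add: Zp_p_eq_add_pow_one)

lemma Zp_p_pow_apply: "(Zp_p p [^]\<^bsub>Zp p\<^esub> (k::nat)) n = p ^ k mod p ^ n"
  by (simp add: Zp_nat_pow_apply Zp_p_def power_mod)

lemma Zp_p_pow_divides:
  assumes x: "x \<in> carrier (Zp p)" and x_K: "x K = 0"
  shows "(Zp_p p [^]\<^bsub>Zp p\<^esub> K) divides\<^bsub>Zp p\<^esub> x"
proof -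
  define c where "c n = x (n + K) div p ^ K" for n
  have x_eq: "x (n + K) = p ^ K * c n" for n
  proof -
    have "x (n + K) mod p ^ K = 0"
      using Zp_apply_mod_le[OF x, of K "n + K"] x_K by simp
    then show ?thesis
      unfolding c_def by (simp add: mod_0_imp_dvd)
  qed
  have "c \<in> carrier (Zp p)"
    unfolding Zp_carrier_iff
  proof (intro allI conjI)
    fix n
    have "p ^ K * 0 \<le> p ^ K * c n" "p ^ K * c n < p ^ K * p ^ n"
      using Zp_apply_bounds[OF x, of "n + K"] by (simp_all add: x_eq power_add mult.commute)
    then show "0 \<le> c n" "c n < p ^ n"
      by (simp_all only: mult_le_cancel_left_pos mult_less_cancel_left_pos p_pow_pos)
    have "p ^ K * (c (Suc n) mod p ^ n) = x (Suc n + K) mod p ^ (K + n)"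
      by (simp only: x_eq power_add mult_mod_right)
    also have "\<dots> = x (n + K)"
      using Zp_apply_mod_le[OF x, of "K + n" "Suc n + K"] by (simp add: add.commute)
    also have "\<dots> = p ^ K * c n"
      by (rule x_eq)
    finally show "c (Suc n) mod p ^ n = c n"
      using p_ge_2 by simp
  qed
  moreover have "x = (Zp_p p [^]\<^bsub>Zp p\<^esub> K) \<otimes>\<^bsub>Zp p\<^esub> c"
  proof
    fix n
    have "x n = p ^ K * c n mod p ^ n"
      using Zp_apply_mod_le[OF x, of n "n + K"] by (simp add: x_eq)
    then show "x n = ((Zp_p p [^]\<^bsub>Zp p\<^esub> K) \<otimes>\<^bsub>Zp p\<^esub> c) n"
      by (simp add: Zp_p_pow_apply mod_mult_left_eq)
  qed
  ultimately show ?thesis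
    unfolding factor_def by blast
qed

lemma Zp_ring_det_apply:
  assumes M: "\<And>i j. i < s \<Longrightarrow> j < s \<Longrightarrow> M i j \<in> carrier (Zp p)"
  shows "ring_det (Zp p) s M n = det (mat s s (\<lambda>(i, j). M i j n)) mod p ^ n"
proof -
  let ?perms = "{\<sigma>. \<sigma> permutes {0..<s}}"
  let ?sgn = "\<lambda>\<sigma>. if sign \<sigma> = (1::int) then \<one>\<^bsub>Zp p\<^esub> else \<ominus>\<^bsub>Zp p\<^esub> \<one>\<^bsub>Zp p\<^esub>"
  have sgn_apply: "?sgn \<sigma> n = sign \<sigma> mod p ^ n" for \<sigma> :: "nat \<Rightarrow> nat"
    by (cases \<sigma> rule: sign_cases) (simp_all add: Zp_a_inv_apply mod_minus_eq)
  have row_closed: "(\<lambda>i. M i (\<sigma> i)) \<in> {0..<s} \<rightarrow> carrier (Zp p)" if "\<sigma> \<in> ?perms" for \<sigma>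
    using that M permutes_in_image by fastforce
  have "ring_det (Zp p) s M n =
      (\<Sum>\<sigma>\<in>?perms. (sign \<sigma> mod p ^ n * ((\<Prod>i\<in>{0..<s}. M i (\<sigma> i) n) mod p ^ n)) mod p ^ n) mod p ^ n"
    unfolding ring_det_def using row_closed
    by (simp add: Zp_finsum_apply Zp_finprod_apply sgn_apply finite_permutations Pi_iff)
  also have "\<dots> = (\<Sum>\<sigma>\<in>?perms. sign \<sigma> * (\<Prod>i\<in>{0..<s}. M i (\<sigma> i) n)) mod p ^ n"
    by (simp add: mod_mult_eq mod_sum_eq)
  also have "\<dots> = det (mat s s (\<lambda>(i, j). M i j n)) mod p ^ n"
    by (subst det_def'[of _ s]) (auto intro!: arg_cong2[where f = "(mod)"] sum.cong prod.cong
        dest: permutes_in_image)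
  finally show ?thesis .
qed

end

section \<open>Determinants of integer matrices\<close>

lemma sum_Least_le_sum_levels:
  fixes lev :: "'u \<Rightarrow> nat" and d :: "nat \<Rightarrow> nat"
  assumes U: "finite U" and card_level: "\<And>k. card {u\<in>U. lev u = k} \<le> d k" and "X \<subseteq> U"
  shows "(\<Sum>i=1..card X. LEAST k. i \<le> (\<Sum>j\<le>k. d j)) \<le> (\<Sum>u\<in>X. lev u)"
  using \<open>X \<subseteq> U\<close>
proof (induction "card X" arbitrary: X)
  case 0
  then show ?case by simp
next
  case (Suc t)
  have X: "finite X" "X \<noteq> {}"
    using Suc.hyps(2) Suc.prems U finite_subset by fastforce+
  define m where "m = Max (lev ` X)"
  have "m \<in> lev ` X"
    unfolding m_def using X by (intro Max_in) auto
  then obtain u0 where u0: "u0 \<in> X" "lev u0 = m"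
    by blast
  have "X \<subseteq> (\<Union>k\<le>m. {u\<in>U. lev u = k})"
    using Suc.prems X by (auto simp: m_def)
  then have "Suc t \<le> card (\<Union>k\<le>m. {u\<in>U. lev u = k})"
    unfolding Suc.hyps(2) using U by (intro card_mono) auto
  also have "\<dots> \<le> (\<Sum>k\<le>m. card {u\<in>U. lev u = k})"
    by (rule card_UN_le) simp
  also have "\<dots> \<le> (\<Sum>k\<le>m. d k)"
    by (intro sum_mono card_level)
  finally have "(LEAST k. Suc t \<le> (\<Sum>j\<le>k. d j)) \<le> lev u0"
    unfolding u0(2) by (rule Least_le)
  moreover have "(\<Sum>i=1..t. LEAST k. i \<le> (\<Sum>j\<le>k. d j)) \<le> (\<Sum>u\<in>X - {u0}. lev u)"
  proof -
    have "card (X - {u0}) = t"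
      using Suc.hyps(2) u0(1) X(1) by simp
    then show ?thesis
      using Suc.hyps(1)[of "X - {u0}"] Suc.prems by auto
  qed
  ultimately show ?case
    using sum.remove[OF X(1) u0(1), of lev] unfolding Suc.hyps(2)[symmetric] by simp
qed

lemma det_mod_eq:
  fixes A B :: "int mat"
  assumes A: "A \<in> carrier_mat n n" and B: "B \<in> carrier_mat n n"
    and entries: "\<And>i j. i < n \<Longrightarrow> j < n \<Longrightarrow> A $$ (i, j) mod q = B $$ (i, j) mod q"
  shows "det A mod q = det B mod q"
proof -
  let ?perms = "{\<sigma>. \<sigma> permutes {0..<n}}"
  have "(signof \<sigma> * (\<Prod>i=0..<n. A $$ (i, \<sigma> i))) mod q = (signof \<sigma> * (\<Prod>i=0..<n. B $$ (i, \<sigma> i))) mod q"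
    if "\<sigma> \<in> ?perms" for \<sigma>
  proof -
    have \<sigma>: "\<sigma> i < n" if "i \<in> {0..<n}" for i
      using permutes_in_image[of \<sigma> "{0..<n}" i] \<open>\<sigma> \<in> ?perms\<close> that by simp
    have prod_mod: "(\<Prod>i=0..<n. A $$ (i, \<sigma> i) mod q) = (\<Prod>i=0..<n. B $$ (i, \<sigma> i) mod q)"
      using entries \<sigma> by (intro prod.cong) simp_all
    have "(\<Prod>i=0..<n. A $$ (i, \<sigma> i)) mod q = (\<Prod>i=0..<n. A $$ (i, \<sigma> i) mod q) mod q"
      by (rule mod_prod_eq[symmetric])
    also have "\<dots> = (\<Prod>i=0..<n. B $$ (i, \<sigma> i)) mod q"
      unfolding prod_mod by (rule mod_prod_eq)
    finally have "(signof \<sigma> * ((\<Prod>i=0..<n. A $$ (i, \<sigma> i)) mod q)) mod q =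
        (signof \<sigma> * ((\<Prod>i=0..<n. B $$ (i, \<sigma> i)) mod q)) mod q"
      by (rule arg_cong)
    then show ?thesis
      by (simp only: mod_mult_right_eq)
  qed
  then have "(\<Sum>\<sigma>\<in>?perms. (signof \<sigma> * (\<Prod>i=0..<n. A $$ (i, \<sigma> i))) mod q) mod q =
      (\<Sum>\<sigma>\<in>?perms. (signof \<sigma> * (\<Prod>i=0..<n. B $$ (i, \<sigma> i))) mod q) mod q"
    by (simp only: cong: sum.cong)
  then show ?thesis
    unfolding det_def'[OF A] det_def'[OF B] by (simp only: mod_sum_eq)
qed

lemma det_rows_dvd:
  fixes v :: "nat \<Rightarrow> 'a :: {comm_ring_1, idom_divide} vec"
  assumes v: "\<And>j. j < n \<Longrightarrow> v j \<in> carrier_vec n"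
    and dvd: "\<And>j i. j < n \<Longrightarrow> i < n \<Longrightarrow> a j dvd v j $ i"
  shows "(\<Prod>j=0..<n. a j) dvd det (mat\<^sub>r n n v)"
proof -
  define u where "u j = vec n (\<lambda>i. v j $ i div a j)" for j
  have "mat\<^sub>r n n v = mat\<^sub>r n n (\<lambda>j. a j \<cdot>\<^sub>v u j)"
    using v dvd by (intro eq_matI) (auto simp: u_def)
  also have "det (mat\<^sub>r n n (\<lambda>j. a j \<cdot>\<^sub>v u j)) = (\<Prod>j=0..<n. a j) * det (mat\<^sub>r n n u)"
    by (rule det_rows_mul) (simp add: u_def)
  finally show ?thesis
    by simp
qed

lemma det_level_rows_dvd:
  fixes w :: "'u \<Rightarrow> int vec" and lev :: "'u \<Rightarrow> nat" and d :: "nat \<Rightarrow> nat"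
  assumes U: "finite U" and w: "\<And>u. u \<in> U \<Longrightarrow> w u \<in> carrier_vec n"
    and w_dvd: "\<And>u i. u \<in> U \<Longrightarrow> i < n \<Longrightarrow> p ^ lev u dvd w u $ i"
    and card_level: "\<And>k. card {u\<in>U. lev u = k} \<le> d k"
    and f: "\<And>j. j < n \<Longrightarrow> f j \<in> U"
  shows "p ^ (\<Sum>i=1..n. LEAST k. i \<le> (\<Sum>j\<le>k. d j)) dvd det (mat\<^sub>r n n (\<lambda>j. w (f j)))"
proof (cases "inj_on f {0..<n}")
  case True
  have image: "f ` {0..<n} \<subseteq> U" "card (f ` {0..<n}) = n"
    using f card_image[OF True] by auto
  have "(\<Sum>i=1..n. LEAST k. i \<le> (\<Sum>j\<le>k. d j)) \<le> (\<Sum>u\<in>f ` {0..<n}. lev u)"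
    using sum_Least_le_sum_levels[OF U card_level image(1)] unfolding image(2) .
  also have "\<dots> = (\<Sum>j=0..<n. lev (f j))"
    using sum.reindex[OF True, of lev] by simp
  finally have "p ^ (\<Sum>i=1..n. LEAST k. i \<le> (\<Sum>j\<le>k. d j)) dvd p ^ (\<Sum>j=0..<n. lev (f j))"
    by (rule le_imp_power_dvd)
  also have "\<dots> = (\<Prod>j=0..<n. p ^ lev (f j))"
    by (rule power_sum)
  also have "\<dots> dvd det (mat\<^sub>r n n (\<lambda>j. w (f j)))"
    using f w w_dvd by (intro det_rows_dvd) auto
  finally show ?thesis .
next
  case False
  then obtain j1 j2 where "j1 < n" "j2 < n" "j1 \<noteq> j2" "f j1 = f j2"
    unfolding inj_on_def by auto
  then have "det (mat\<^sub>r n n (\<lambda>j. w (f j))) = 0"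
    using f w by (intro det_identical_rows[of _ n j1 j2]) auto
  then show ?thesis
    by simp
qed

lemma det_rows_level_span_dvd:
  fixes w :: "'u \<Rightarrow> int vec" and c :: "nat \<Rightarrow> 'u \<Rightarrow> int"
    and lev :: "'u \<Rightarrow> nat" and d :: "nat \<Rightarrow> nat"
  assumes U: "finite U" and w: "\<And>u. u \<in> U \<Longrightarrow> w u \<in> carrier_vec n"
    and w_dvd: "\<And>u i. u \<in> U \<Longrightarrow> i < n \<Longrightarrow> p ^ lev u dvd w u $ i"
    and card_level: "\<And>k. card {u\<in>U. lev u = k} \<le> d k"
  shows "p ^ (\<Sum>i=1..n. LEAST k. i \<le> (\<Sum>j\<le>k. d j))
           dvd det (mat n n (\<lambda>(j, i). \<Sum>u\<in>U. c j u * w u $ i))"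
proof -
  obtain g where g: "bij_betw g {0..<card U} U"
    using ex_bij_betw_nat_finite[OF U] by blast
  define V where "V = {0..<card U}"
  define row where "row j = finsum_vec TYPE(int) n (\<lambda>v. c j (g v) \<cdot>\<^sub>v w (g v)) V" for j
  let ?choices = "{f. (\<forall>j\<in>{0..<n}. f j \<in> V) \<and> (\<forall>j. j \<notin> {0..<n} \<longrightarrow> f j = j)}"
  have gV: "g v \<in> U" if "v \<in> V" for v
    using g that unfolding V_def by (auto simp: bij_betw_def)
  have dim_wg: "dim_vec (w (g v)) = n" if "v \<in> V" for v
    using w[OF gV[OF that]] by simp
  have "row j $ i = (\<Sum>u\<in>U. c j u * w u $ i)" if "i < n" for i j
  proof -
    have "row j $ i = (\<Sum>v\<in>V. (c j (g v) \<cdot>\<^sub>v w (g v)) $ i)"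
      unfolding row_def using gV w that by (intro index_finsum_vec) (auto simp: V_def)
    also have "\<dots> = (\<Sum>v\<in>V. c j (g v) * w (g v) $ i)"
      using that by (intro sum.cong refl) (simp add: dim_wg)
    also have "\<dots> = (\<Sum>u\<in>U. c j u * w u $ i)"
      unfolding V_def by (rule sum.reindex_bij_betw[OF g])
    finally show ?thesis .
  qed
  then have "mat n n (\<lambda>(j, i). \<Sum>u\<in>U. c j u * w u $ i) = mat\<^sub>r n n row"
    by (intro eq_matI) (simp_all add: row_def)
  also have "det (mat\<^sub>r n n row) = (\<Sum>f\<in>?choices. det (mat\<^sub>r n n (\<lambda>j. c j (g (f j)) \<cdot>\<^sub>v w (g (f j)))))"
    unfolding row_def using w gV by (intro det_linear_rows_sum) (auto simp: V_def)
  also have "\<dots> = (\<Sum>f\<in>?choices. (\<Prod>j=0..<n. c j (g (f j))) * det (mat\<^sub>r n n (\<lambda>j. w (g (f j)))))"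
    using w gV by (intro sum.cong refl det_rows_mul) auto
  finally have det_eq: "det (mat n n (\<lambda>(j, i). \<Sum>u\<in>U. c j u * w u $ i)) = \<dots>" .
  have "p ^ (\<Sum>i=1..n. LEAST k. i \<le> (\<Sum>j\<le>k. d j)) dvd det (mat\<^sub>r n n (\<lambda>j. w (g (f j))))"
    if "f \<in> ?choices" for f
    using that gV by (intro det_level_rows_dvd[OF U w w_dvd card_level]) auto
  then show ?thesis
    unfolding det_eq by (intro dvd_sum) simp
qed

section \<open>Linear combinations, ideals and local rings\<close>

lemma (in ring_hom_ring) hom_add_pow_one: "h (add_pow R (n::nat) \<one>) = add_pow S n \<one>\<^bsub>S\<^esub>"
proof (induction n)
  case 0
  show ?case by (simp only: R.add.nat_pow_0 S.add.nat_pow_0 hom_zero)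
next
  case (Suc n)
  have "h (add_pow R (Suc n) \<one>) = h (add_pow R n \<one>) \<oplus>\<^bsub>S\<^esub> h \<one>"
    by (simp only: R.add.nat_pow_Suc hom_add R.add.nat_pow_closed R.one_closed)
  then show ?case
    by (simp only: Suc.IH S.add.nat_pow_Suc hom_one)
qed

context cring
begin

lemma ring_det_closed:
  assumes "\<And>i j. i < s \<Longrightarrow> j < s \<Longrightarrow> M i j \<in> carrier R"
  shows "ring_det R s M \<in> carrier R"
proof -
  have "(\<lambda>i. M i (\<sigma> i)) \<in> {0..<s} \<rightarrow> carrier R" if "\<sigma> permutes {0..<s}" for \<sigma>
    using assms that permutes_in_image by fastforce
  then show ?thesis
    unfolding ring_det_def by (intro finsum_closed) (auto intro!: finprod_closed)
qed

lemma idealI_closed: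
  assumes "I \<subseteq> carrier R" "\<zero> \<in> I" "\<And>x y. x \<in> I \<Longrightarrow> y \<in> I \<Longrightarrow> x \<oplus> y \<in> I"
    and "\<And>a x. a \<in> carrier R \<Longrightarrow> x \<in> I \<Longrightarrow> a \<otimes> x \<in> I"
  shows "ideal I R"
proof (rule idealI)
  have "\<ominus> a \<in> I" if "a \<in> I" for a
    using assms(1) assms(4)[of "\<ominus> \<one>" a] that by (auto simp: l_minus)
  then show "subgroup I (add_monoid R)"
    using assms(1-3) by (intro add.subgroupI) auto
next
  fix a x assume "a \<in> I" "x \<in> carrier R"
  then show "x \<otimes> a \<in> I" "a \<otimes> x \<in> I"
    using assms(1,4) m_comm[of a x] by auto
qed (rule ring_axioms)

lemma finsum_in_ideal:
  assumes J: "ideal J R" and "finite T" "f \<in> T \<rightarrow> J"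
  shows "finsum R f T \<in> J"
  using assms(2,3)
proof (induction T rule: finite_induct)
  case empty
  then show ?case using ideal.axioms(1)[OF J] additive_subgroup.zero_closed by auto
next
  case (insert x F)
  then have "f \<in> F \<rightarrow> carrier R" "f x \<in> carrier R"
    using ideal.Icarr[OF J] by auto
  then show ?case
    using insert ideal.axioms(1)[OF J] by (simp add: additive_subgroup.a_closed)
qed

lemma ideal_power_0 [simp]: "ideal_power R M 0 = carrier R"
  by (simp add: ideal_power_def ideals_set_def)

lemma ideal_power_Suc: "ideal_power R M (Suc k) = ideal_prod R (ideal_power R M k) M"
  by (simp add: ideal_power_def ideals_set_def)

lemma ideal_power_ideal: "ideal M R \<Longrightarrow> ideal (ideal_power R M k) R"
  by (induction k) (simp_all add: oneideal ideal_power_Suc ideal_prod_is_ideal)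

lemma ideal_power_mult:
  assumes M: "ideal M R" and x: "x \<in> ideal_power R M k" and m: "m \<in> M"
  shows "m \<otimes> x \<in> ideal_power R M (Suc k)"
proof -
  have "x \<otimes> m \<in> ideal_power R M (Suc k)"
    unfolding ideal_power_Suc using x m by (rule ideal_prod.prod)
  moreover have "x \<otimes> m = m \<otimes> x"
    using ideal.Icarr[OF ideal_power_ideal[OF M] x] ideal.Icarr[OF M m] by (rule m_comm)
  ultimately show ?thesis
    by simp
qed

lemma lin_comb_closed:
  assumes "S \<subseteq> carrier R" "a \<in> S \<rightarrow> carrier R"
  shows "(\<Oplus>s\<in>S. a s \<otimes> s) \<in> carrier R"
  using assms by (intro finsum_closed) auto

lemma lin_comb_add:
  assumes "S \<subseteq> carrier R" "a \<in> S \<rightarrow> carrier R" "b \<in> S \<rightarrow> carrier R"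
  shows "(\<Oplus>s\<in>S. a s \<otimes> s) \<oplus> (\<Oplus>s\<in>S. b s \<otimes> s) = (\<Oplus>s\<in>S. (a s \<oplus> b s) \<otimes> s)"
proof -
  have "(\<Oplus>s\<in>S. (a s \<oplus> b s) \<otimes> s) = (\<Oplus>s\<in>S. a s \<otimes> s \<oplus> b s \<otimes> s)"
    using assms by (intro finsum_cong') (auto simp: Pi_iff subset_iff l_distr)
  also have "\<dots> = (\<Oplus>s\<in>S. a s \<otimes> s) \<oplus> (\<Oplus>s\<in>S. b s \<otimes> s)"
    using assms by (intro finsum_addf) auto
  finally show ?thesis ..
qed

lemma lin_comb_diff:
  assumes "S \<subseteq> carrier R" "a \<in> S \<rightarrow> carrier R" "b \<in> S \<rightarrow> carrier R"
  shows "(\<Oplus>s\<in>S. a s \<otimes> s) = (\<Oplus>s\<in>S. (a s \<ominus> b s) \<otimes> s) \<oplus> (\<Oplus>s\<in>S. b s \<otimes> s)"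
proof -
  have "(\<Oplus>s\<in>S. (a s \<ominus> b s) \<otimes> s) \<oplus> (\<Oplus>s\<in>S. b s \<otimes> s) = (\<Oplus>s\<in>S. ((a s \<ominus> b s) \<oplus> b s) \<otimes> s)"
    using assms by (intro lin_comb_add) auto
  also have "\<dots> = (\<Oplus>s\<in>S. a s \<otimes> s)"
    using assms by (intro finsum_cong') (auto simp: Pi_iff minus_eq a_assoc l_neg)
  finally show ?thesis ..
qed

lemma lin_comb_smult:
  assumes "finite S" "S \<subseteq> carrier R" "a \<in> S \<rightarrow> carrier R" "c \<in> carrier R"
  shows "c \<otimes> (\<Oplus>s\<in>S. a s \<otimes> s) = (\<Oplus>s\<in>S. (c \<otimes> a s) \<otimes> s)"
proof -
  have "c \<otimes> (\<Oplus>s\<in>S. a s \<otimes> s) = (\<Oplus>s\<in>S. c \<otimes> (a s \<otimes> s))"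
    using assms by (intro finsum_rdistr) auto
  also have "\<dots> = (\<Oplus>s\<in>S. (c \<otimes> a s) \<otimes> s)"
    using assms by (intro finsum_cong') (auto simp: Pi_iff subset_iff m_assoc)
  finally show ?thesis .
qed

lemma lin_comb_remove:
  assumes "finite S" "S \<subseteq> carrier R" "a \<in> S \<rightarrow> carrier R" "s0 \<in> S"
  shows "(\<Oplus>s\<in>S. a s \<otimes> s) = a s0 \<otimes> s0 \<oplus> (\<Oplus>s\<in>S - {s0}. a s \<otimes> s)"
proof -
  have "(\<Oplus>s\<in>insert s0 (S - {s0}). a s \<otimes> s) = a s0 \<otimes> s0 \<oplus> (\<Oplus>s\<in>S - {s0}. a s \<otimes> s)"
    using assms by (intro finsum_insert) (auto simp: Pi_iff subset_iff)
  then show ?thesis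
    by (simp add: insert_absorb assms(4))
qed

lemma lin_combs_ideal:
  assumes "finite T" "T \<subseteq> carrier R"
  shows "ideal {x. \<exists>a\<in>T \<rightarrow> carrier R. x = (\<Oplus>t\<in>T. a t \<otimes> t)} R"
    (is "ideal ?span R")
proof (rule idealI_closed)
  show "?span \<subseteq> carrier R"
    using lin_comb_closed[OF assms(2)] by blast
  have "(\<Oplus>t\<in>T. \<zero> \<otimes> t) = (\<Oplus>t\<in>T. \<zero>)"
    using assms(2) by (intro finsum_cong') auto
  then have "(\<Oplus>t\<in>T. \<zero> \<otimes> t) = \<zero>"
    by simp
  then show "\<zero> \<in> ?span"
    by (intro CollectI bexI[of _ "\<lambda>_. \<zero>"]) auto
next
  fix x y assume "x \<in> ?span" "y \<in> ?span"
  then obtain a b where "a \<in> T \<rightarrow> carrier R" "x = (\<Oplus>t\<in>T. a t \<otimes> t)"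
    and "b \<in> T \<rightarrow> carrier R" "y = (\<Oplus>t\<in>T. b t \<otimes> t)"
    by blast
  then show "x \<oplus> y \<in> ?span"
    using lin_comb_add[OF assms(2)] by (auto intro!: bexI[of _ "\<lambda>t. a t \<oplus> b t"])
next
  fix c x assume "c \<in> carrier R" "x \<in> ?span"
  then obtain a where "a \<in> T \<rightarrow> carrier R" "x = (\<Oplus>t\<in>T. a t \<otimes> t)"
    by blast
  then show "c \<otimes> x \<in> ?span"
    using lin_comb_smult[OF assms] \<open>c \<in> carrier R\<close> by (auto intro!: bexI[of _ "\<lambda>t. c \<otimes> a t"])
qed

lemma lin_combs_superset:
  assumes "finite T" "T \<subseteq> carrier R"
  shows "T \<subseteq> {x. \<exists>a\<in>T \<rightarrow> carrier R. x = (\<Oplus>t\<in>T. a t \<otimes> t)}"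
proof
  fix t assume t: "t \<in> T"
  have "(\<Oplus>s\<in>T. (if s = t then \<one> else \<zero>) \<otimes> s) = (\<Oplus>s\<in>T. if t = s then s else \<zero>)"
    using assms by (intro finsum_cong') auto
  also have "\<dots> = t"
    using finsum_singleton[OF t assms(1), of "\<lambda>s. s"] assms t by auto
  finally show "t \<in> {x. \<exists>a\<in>T \<rightarrow> carrier R. x = (\<Oplus>t\<in>T. a t \<otimes> t)}"
    by (intro CollectI bexI[of _ "\<lambda>s. if s = t then \<one> else \<zero>"]) auto
qed

(* The relation (b a(s0) - 1) s0 in N' says that b inverts the coefficient of s0 modulo N', so
   modulo N' the element s0 is a combination of the others. *)
lemma lin_comb_mod_remove:
  assumes N': "ideal N' R" and S: "finite S" "S \<subseteq> carrier R" "s0 \<in> S"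
    and a: "a \<in> S \<rightarrow> carrier R" "(\<Oplus>s\<in>S. a s \<otimes> s) \<in> N'"
    and b: "b \<in> carrier R" "(b \<otimes> a s0 \<ominus> \<one>) \<otimes> s0 \<in> N'"
    and c: "c \<in> S \<rightarrow> carrier R" and x: "x \<in> carrier R" "x \<ominus> (\<Oplus>s\<in>S. c s \<otimes> s) \<in> N'"
  shows "\<exists>c'\<in>S - {s0} \<rightarrow> carrier R. x \<ominus> (\<Oplus>s\<in>S - {s0}. c' s \<otimes> s) \<in> N'"
proof -
  let ?S' = "S - {s0}"
  have S': "finite ?S'" "?S' \<subseteq> carrier R" "a \<in> ?S' \<rightarrow> carrier R" "c \<in> ?S' \<rightarrow> carrier R"
    using S a c by auto
  have s0: "s0 \<in> carrier R" "a s0 \<in> carrier R" "c s0 \<in> carrier R"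
    using S a c by auto
  define e where "e = \<ominus> (c s0 \<otimes> b)"
  have e: "e \<in> carrier R"
    using s0 b by (simp add: e_def)
  define La where "La = (\<Oplus>s\<in>?S'. a s \<otimes> s)"
  define Lc where "Lc = (\<Oplus>s\<in>?S'. c s \<otimes> s)"
  have L: "La \<in> carrier R" "Lc \<in> carrier R"
    unfolding La_def Lc_def using S' by (auto intro: lin_comb_closed)
  have combination: "(\<Oplus>s\<in>?S'. (c s \<oplus> e \<otimes> a s) \<otimes> s) = Lc \<oplus> e \<otimes> La"
    unfolding Lc_def La_def using S' e
    by (simp add: lin_comb_add lin_comb_smult Pi_iff)
  have "x \<ominus> (Lc \<oplus> e \<otimes> La) =
      (x \<ominus> (c s0 \<otimes> s0 \<oplus> Lc)) \<oplus> c s0 \<otimes> (b \<otimes> (a s0 \<otimes> s0 \<oplus> La) \<ominus> (b \<otimes> a s0 \<ominus> \<one>) \<otimes> s0)"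
    unfolding e_def using x(1) L s0 b(1) by algebra
  also have "\<dots> \<in> N'"
  proof -
    have "x \<ominus> (c s0 \<otimes> s0 \<oplus> Lc) \<in> N'" "a s0 \<otimes> s0 \<oplus> La \<in> N'"
      using x(2) a(2) lin_comb_remove[OF S(1,2) c S(3)] lin_comb_remove[OF S(1,2) a(1) S(3)]
      unfolding La_def Lc_def by simp_all
    then show ?thesis
      using b s0 ideal.axioms(1)[OF N'] ideal.I_l_closed[OF N']
      by (simp add: additive_subgroup.a_closed additive_subgroup.a_inv_closed minus_eq)
  qed
  finally have "x \<ominus> (\<Oplus>s\<in>?S'. (c s \<oplus> e \<otimes> a s) \<otimes> s) \<in> N'"
    unfolding combination .
  moreover have "(\<lambda>s. c s \<oplus> e \<otimes> a s) \<in> ?S' \<rightarrow> carrier R"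
    using S'(3,4) e by (auto simp: Pi_iff)
  ultimately show ?thesis
    by (auto intro!: bexI[of _ "\<lambda>s. c s \<oplus> e \<otimes> a s"])
qed

(* A spanning subset of minimal size is independent: a relation with a coefficient outside M
   would let lin_comb_mod_remove shrink it further. *)
lemma exists_basis_mod:
  assumes M_inv: "\<And>a. a \<in> carrier R \<Longrightarrow> a \<notin> M \<Longrightarrow> \<exists>b\<in>carrier R. b \<otimes> a \<ominus> \<one> \<in> M"
    and N': "ideal N' R" and N: "N \<subseteq> carrier R"
    and M_N: "\<And>m x. m \<in> M \<Longrightarrow> x \<in> N \<Longrightarrow> m \<otimes> x \<in> N'"
    and T: "finite T" "T \<subseteq> N"
    and T_span: "\<And>x. x \<in> N \<Longrightarrow> \<exists>a\<in>T \<rightarrow> carrier R. x \<ominus> (\<Oplus>t\<in>T. a t \<otimes> t) \<in> N'"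
  shows "\<exists>S\<subseteq>T. (\<forall>a\<in>S \<rightarrow> carrier R. (\<Oplus>s\<in>S. a s \<otimes> s) \<in> N' \<longrightarrow> (\<forall>s\<in>S. a s \<in> M))
               \<and> (\<forall>x\<in>N. \<exists>a\<in>S \<rightarrow> carrier R. x \<ominus> (\<Oplus>s\<in>S. a s \<otimes> s) \<in> N')"
proof -
  define spans where
    "spans S \<longleftrightarrow> S \<subseteq> T \<and> (\<forall>x\<in>N. \<exists>a\<in>S \<rightarrow> carrier R. x \<ominus> (\<Oplus>s\<in>S. a s \<otimes> s) \<in> N')" for S
  have "spans T"
    using T_span by (simp add: spans_def)
  then obtain S where S: "spans S" and S_min: "\<And>S'. spans S' \<Longrightarrow> card S \<le> card S'"
    using ex_has_least_nat[of spans T card] by blast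
  have S_fin: "finite S" and S_N: "S \<subseteq> N"
    using S T finite_subset by (auto simp: spans_def)
  have S_carr: "S \<subseteq> carrier R"
    using S_N N by blast
  have "\<forall>s\<in>S. a s \<in> M" if a: "a \<in> S \<rightarrow> carrier R" "(\<Oplus>s\<in>S. a s \<otimes> s) \<in> N'" for a
  proof (rule ccontr)
    assume "\<not> (\<forall>s\<in>S. a s \<in> M)"
    then obtain s0 where s0: "s0 \<in> S" "a s0 \<notin> M"
      by blast
    then obtain b where b: "b \<in> carrier R" "b \<otimes> a s0 \<ominus> \<one> \<in> M"
      using M_inv a(1) by blast
    then have b_s0: "(b \<otimes> a s0 \<ominus> \<one>) \<otimes> s0 \<in> N'"
      using M_N s0(1) S_N by blast
    have "spans (S - {s0})"
      unfolding spans_def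
    proof (intro conjI ballI)
      show "S - {s0} \<subseteq> T"
        using S by (auto simp: spans_def)
      fix x assume x: "x \<in> N"
      then obtain c where "c \<in> S \<rightarrow> carrier R" "x \<ominus> (\<Oplus>s\<in>S. c s \<otimes> s) \<in> N'"
        using S by (auto simp: spans_def)
      then show "\<exists>c'\<in>S - {s0} \<rightarrow> carrier R. x \<ominus> (\<Oplus>s\<in>S - {s0}. c' s \<otimes> s) \<in> N'"
        using x N by (intro lin_comb_mod_remove[OF N' S_fin S_carr s0(1) a b(1) b_s0]) auto
    qed
    then have "card S \<le> card (S - {s0})"
      by (rule S_min)
    then show False
      using card_Diff1_less[OF S_fin s0(1)] by simp
  qed
  then show ?thesis
    using S by (auto simp: spans_def)
qed

lemma maximalideal_inv_mod:
  assumes M: "maximalideal M R" and a: "a \<in> carrier R" "a \<notin> M"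
  shows "\<exists>b\<in>carrier R. b \<otimes> a \<ominus> \<one> \<in> M"
proof -
  have M_ideal: "ideal M R"
    using M by (rule maximalideal.axioms(1))
  let ?Y = "M <+>\<^bsub>R\<^esub> PIdl a"
  have Y: "ideal ?Y R"
    by (rule add_ideals[OF M_ideal cgenideal_ideal[OF a(1)]])
  have "M \<subseteq> ?Y"
  proof
    fix m assume "m \<in> M"
    then have "m = m \<oplus> \<zero> \<otimes> a" "m \<in> carrier R"
      using a(1) ideal.Icarr[OF M_ideal] by auto
    then show "m \<in> ?Y"
      using \<open>m \<in> M\<close> unfolding set_add_def' cgenideal_def by blast
  qed
  moreover have "a \<in> ?Y"
  proof -
    have "a = \<zero> \<oplus> \<one> \<otimes> a" "\<zero> \<in> M"
      using a(1) M_ideal by (auto simp: additive_subgroup.zero_closed ideal.axioms(1))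
    then show ?thesis
      unfolding set_add_def' cgenideal_def by blast
  qed
  ultimately have "?Y = carrier R"
    using maximalideal.I_maximal[OF M Y] ideal.axioms(1)[OF Y] a(2)
    by (auto dest: additive_subgroup.a_subset)
  then obtain m b where m: "m \<in> M" and b: "b \<in> carrier R" and one: "\<one> = m \<oplus> b \<otimes> a"
    unfolding set_add_def' cgenideal_def using one_closed by blast
  have "m \<in> carrier R"
    using m ideal.Icarr[OF M_ideal] by blast
  then have "b \<otimes> a \<ominus> \<one> = \<ominus> m"
    unfolding one using b a(1) by algebra
  moreover have "\<ominus> m \<in> M"
    using m M_ideal by (simp add: additive_subgroup.a_inv_closed ideal.axioms(1))
  ultimately have "b \<otimes> a \<ominus> \<one> \<in> M"
    by (simp only:)
  with b show ?thesis
    by blast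
qed

lemma maximalidealI_inv_mod:
  assumes M: "ideal M R" and one: "\<one> \<notin> M"
    and inv: "\<And>a. a \<in> carrier R \<Longrightarrow> a \<notin> M \<Longrightarrow> \<exists>b\<in>carrier R. b \<otimes> a \<ominus> \<one> \<in> M"
  shows "maximalideal M R"
proof (rule maximalidealI[OF M])
  show "carrier R \<noteq> M"
    using one by blast
  fix Y assume Y: "ideal Y R" "M \<subseteq> Y" "Y \<subseteq> carrier R"
  show "Y = M \<or> Y = carrier R"
  proof (cases "Y \<subseteq> M")
    case False
    then obtain a where a: "a \<in> Y" "a \<notin> M"
      by blast
    then obtain b where b: "b \<in> carrier R" "b \<otimes> a \<ominus> \<one> \<in> M"
      using inv Y(3) by blast
    have "a \<in> carrier R"
      using a(1) Y(3) by blast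
    then have "\<one> = b \<otimes> a \<ominus> (b \<otimes> a \<ominus> \<one>)"
      using b(1) by algebra
    also have "\<dots> \<in> Y"
      using a(1) b Y(1,2) ideal.I_l_closed[OF Y(1)] ideal.axioms(1)[OF Y(1)]
      by (auto simp: minus_eq additive_subgroup.a_closed additive_subgroup.a_inv_closed)
    finally show ?thesis
      using ideal.one_imp_carrier[OF Y(1)] by blast
  qed (use Y in blast)
qed

lemma FactRing_carrier: "carrier (R Quot I) = (+>) I ` carrier R"
  unfolding FactRing_def A_RCOSETS_def' by auto

lemma quot_image_mem_iff:
  assumes I: "ideal I R" and M: "ideal M R" "I \<subseteq> M" and x: "x \<in> carrier R"
  shows "I +> x \<in> (+>) I ` M \<longleftrightarrow> x \<in> M"
proof
  assume "I +> x \<in> (+>) I ` M"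
  then obtain m where m: "m \<in> M" "I +> x = I +> m"
    by blast
  then have "x \<ominus> m \<in> M"
    using quotient_eq_iff_same_a_r_cos[OF I x ideal.Icarr[OF M(1) m(1)]] M(2) by auto
  then have "(x \<ominus> m) \<oplus> m \<in> M"
    using m(1) M(1) by (simp add: additive_subgroup.a_closed ideal.axioms(1))
  then show "x \<in> M"
    using x ideal.Icarr[OF M(1) m(1)] by (simp add: minus_eq a_assoc l_neg)
qed blast

lemma maximalideal_quot_image:
  assumes I: "ideal I R" and M: "maximalideal M R" and "I \<subseteq> M"
  shows "maximalideal ((+>) I ` M) (R Quot I)"
proof (rule maximalidealI)
  have M_ideal: "ideal M R"
    using M by (rule maximalideal.axioms(1))
  show "ideal ((+>) I ` M) (R Quot I)"
    by (rule ring_ideal_imp_quot_ideal[OF I M_ideal])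
  show "carrier (R Quot I) \<noteq> (+>) I ` M"
  proof
    assume "carrier (R Quot I) = (+>) I ` M"
    then have "\<one> \<in> M"
      using quot_image_mem_iff[OF I M_ideal \<open>I \<subseteq> M\<close> one_closed] FactRing_carrier by auto
    then show False
      using maximalideal.I_notcarr[OF M] ideal.one_imp_carrier[OF M_ideal] by blast
  qed
  fix Y assume Y: "ideal Y (R Quot I)" "(+>) I ` M \<subseteq> Y" "Y \<subseteq> carrier (R Quot I)"
  let ?V = "{x \<in> carrier R. I +> x \<in> Y}"
  have "ideal ?V R"
    by (rule ring_hom_ring.ideal_vimage[OF ideal.rcos_ring_hom_ring[OF I] Y(1)])
  moreover have "M \<subseteq> ?V"
    using Y(2) ideal.Icarr[OF M_ideal] by blast
  ultimately have "?V = M \<or> ?V = carrier R"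
    using maximalideal.I_maximal[OF M] by blast
  then show "Y = (+>) I ` M \<or> Y = carrier (R Quot I)"
    using Y(2,3) unfolding FactRing_carrier by blast
qed

lemma maximalideal_quot_vimage:
  assumes I: "ideal I R" and M: "maximalideal M (R Quot I)"
  shows "maximalideal {x \<in> carrier R. I +> x \<in> M} R" (is "maximalideal ?V R")
proof (rule maximalidealI)
  have M_ideal: "ideal M (R Quot I)"
    using M by (rule maximalideal.axioms(1))
  have "\<one>\<^bsub>R Quot I\<^esub> \<notin> M"
    using maximalideal.I_notcarr[OF M] ideal.one_imp_carrier[OF M_ideal] by blast
  then show "carrier R \<noteq> ?V"
    by (auto simp: FactRing_def)
  show "ideal ?V R"
    by (rule ring_hom_ring.ideal_vimage[OF ideal.rcos_ring_hom_ring[OF I] M_ideal])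
  have I_V: "I \<subseteq> ?V"
  proof
    fix x assume "x \<in> I"
    then have "I +> x = \<zero>\<^bsub>R Quot I\<^esub>" "x \<in> carrier R"
      using a_rcos_zero[OF I] ideal.Icarr[OF I] by (auto simp: FactRing_def)
    then show "x \<in> ?V"
      using additive_subgroup.zero_closed[OF ideal.axioms(1)[OF M_ideal]] by simp
  qed
  fix Y assume Y: "ideal Y R" "?V \<subseteq> Y" "Y \<subseteq> carrier R"
  have "ideal ((+>) I ` Y) (R Quot I)"
    by (rule ring_ideal_imp_quot_ideal[OF I Y(1)])
  moreover have "M \<subseteq> (+>) I ` Y"
    using Y(2) ideal.Icarr[OF M_ideal] unfolding FactRing_carrier by blast
  moreover have "(+>) I ` Y \<subseteq> carrier (R Quot I)"
    using Y(3) unfolding FactRing_carrier by blast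
  ultimately have "(+>) I ` Y = M \<or> (+>) I ` Y = carrier (R Quot I)"
    using maximalideal.I_maximal[OF M] by blast
  then show "Y = ?V \<or> Y = carrier R"
  proof
    assume "(+>) I ` Y = carrier (R Quot I)"
    then have "\<one> \<in> Y"
      using quot_image_mem_iff[OF I Y(1) _ one_closed] I_V Y(2) unfolding FactRing_carrier by blast
    then show ?thesis
      using ideal.one_imp_carrier[OF Y(1)] by blast
  qed (use Y(2,3) in blast)
qed

end

lemma local_ring_max_ideal:
  assumes "local_ring R"
  shows "maximalideal (max_ideal R) R"
  using assms theI'[of "\<lambda>M. maximalideal M R"] unfolding local_ring_def max_ideal_def by blast

lemma local_ring_max_ideal_unique:
  assumes "local_ring R" "maximalideal M R"
  shows "M = max_ideal R"
  using assms the1_equality[of "\<lambda>M. maximalideal M R"] unfolding local_ring_def max_ideal_def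
  by (simp add: eq_commute)

lemma local_ring_quotient:
  assumes R: "local_ring R" and I: "ideal I R" "I \<subseteq> max_ideal R"
  shows "local_ring (R Quot I)" "max_ideal (R Quot I) = (\<lambda>x. I +>\<^bsub>R\<^esub> x) ` max_ideal R"
proof -
  have R_cring: "cring R"
    using R by (simp add: local_ring_def)
  let ?W = "(\<lambda>x. I +>\<^bsub>R\<^esub> x) ` max_ideal R"
  have W: "maximalideal ?W (R Quot I)"
    using cring.maximalideal_quot_image[OF R_cring I(1) local_ring_max_ideal[OF R] I(2)] .
  have "M = ?W" if "maximalideal M (R Quot I)" for M
  proof -
    have "M \<subseteq> carrier (R Quot I)"
      using that by (simp add: ideal.axioms(1) maximalideal.axioms(1) additive_subgroup.a_subset)
    moreover have "{x \<in> carrier R. I +>\<^bsub>R\<^esub> x \<in> M} = max_ideal R"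
      using cring.maximalideal_quot_vimage[OF R_cring I(1) that] R
      by (simp add: local_ring_max_ideal_unique)
    ultimately show ?thesis
      unfolding cring.FactRing_carrier[OF R_cring] by blast
  qed
  then have unique: "\<exists>!M. maximalideal M (R Quot I)"
    using W by blast
  then show "local_ring (R Quot I)"
    unfolding local_ring_def using ideal.quotient_is_cring[OF I(1) R_cring] by blast
  show "max_ideal (R Quot I) = ?W"
    unfolding max_ideal_def[of "R Quot I"] using the1_equality[OF unique W] .
qed

section \<open>Points of R with values in Z_p\<close>

lemma inverse_mod_prime:
  fixes p c :: int
  assumes "Factorial_Ring.prime p" "\<not> p dvd c"
  shows "\<exists>d::nat. (int d * c) mod p = 1"
proof -
  have "coprime c p"
    using prime_imp_coprime[OF assms] by (simp add: coprime_commute)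
  then obtain u v where uv: "u * c + v * p = 1"
    using bezout_int[of c p] by (auto simp: coprime_iff_gcd_eq_1)
  have p: "p > 1"
    using assms(1) prime_gt_1_int by blast
  have "u * c = 1 - v * p"
    using uv by linarith
  have "(int (nat (u mod p)) * c) mod p = (u * c) mod p"
    using p by (simp add: mod_mult_left_eq)
  also have "\<dots> = (1 - v * p) mod p"
    using \<open>u * c = 1 - v * p\<close> by simp
  also have "\<dots> = 1"
    using p by (simp add: mod_diff_eq[symmetric])
  finally show ?thesis
    by blast
qed

(* s > 0 is assumed so that \<phi> 0 exists; the case s = 0 of the theorem is trivial. *)
locale Zp_points =
  fixes p :: int and R :: "('a, 'b) ring_scheme" (structure)
    and \<iota> :: "(nat \<Rightarrow> int) \<Rightarrow> 'a" and s :: nat and \<phi> :: "nat \<Rightarrow> 'a \<Rightarrow> nat \<Rightarrow> int"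
  assumes prime_p: "Factorial_Ring.prime p"
    and local_R: "local_ring R" and noetherian_R: "noetherian_ring R"
    and \<iota>_hom: "\<iota> \<in> ring_hom (Zp p) R"
    and \<phi>_hom: "\<And>i. i < s \<Longrightarrow> \<phi> i \<in> ring_hom R (Zp p)"
    and s_pos: "0 < s"
begin

sublocale cring R
  using local_R by (simp add: local_ring_def)

sublocale padic p
  using prime_p prime_ge_2_int by unfold_locales blast

lemma \<phi>_hom_ring: "i < s \<Longrightarrow> ring_hom_ring R (Zp p) (\<phi> i)"
  using \<phi>_hom Zp.ring_axioms ring_axioms by (simp add: ring_hom_ringI2)

lemma \<phi>_hom_cring: "i < s \<Longrightarrow> ring_hom_cring R (Zp p) (\<phi> i)"
  using \<phi>_hom Zp_cring cring_axioms unfolding ring_hom_cring_def ring_hom_cring_axioms_def by blast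

lemma \<phi>_closed: "i < s \<Longrightarrow> x \<in> carrier R \<Longrightarrow> \<phi> i x \<in> carrier (Zp p)"
  using \<phi>_hom by (rule ring_hom_closed)

lemma \<phi>_add_apply: "i < s \<Longrightarrow> x \<in> carrier R \<Longrightarrow> y \<in> carrier R \<Longrightarrow>
    \<phi> i (x \<oplus> y) n = (\<phi> i x n + \<phi> i y n) mod p ^ n"
  using ring_hom_add[OF \<phi>_hom] by simp

lemma \<phi>_mult_apply: "i < s \<Longrightarrow> x \<in> carrier R \<Longrightarrow> y \<in> carrier R \<Longrightarrow>
    \<phi> i (x \<otimes> y) n = (\<phi> i x n * \<phi> i y n) mod p ^ n"
  using ring_hom_mult[OF \<phi>_hom] by simp

lemma \<phi>_one_apply: "i < s \<Longrightarrow> \<phi> i \<one> n = 1 mod p ^ n"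
  using ring_hom_one[OF \<phi>_hom] by simp

lemma \<phi>_zero_apply: "i < s \<Longrightarrow> \<phi> i \<zero> n = 0"
  using ring_hom_cring.hom_zero[OF \<phi>_hom_cring] by simp

lemma \<phi>_minus_apply:
  assumes "i < s" "x \<in> carrier R" "y \<in> carrier R"
  shows "\<phi> i (x \<ominus> y) n = (\<phi> i x n - \<phi> i y n) mod p ^ n"
proof -
  have "\<phi> i (x \<ominus> y) n = (\<phi> i x n + (\<ominus>\<^bsub>Zp p\<^esub> \<phi> i y) n) mod p ^ n"
    using assms ring_hom_cring.hom_a_inv[OF \<phi>_hom_cring] by (simp add: minus_eq \<phi>_add_apply)
  then show ?thesis
    using assms by (simp add: Zp_a_inv_apply \<phi>_closed mod_add_right_eq)
qed

lemma \<phi>_add_pow_one: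
  assumes "i < s"
  shows "\<phi> i (add_pow R (n::nat) \<one>) = add_pow (Zp p) n \<one>\<^bsub>Zp p\<^esub>"
  using ring_hom_ring.hom_add_pow_one[OF \<phi>_hom_ring[OF assms]] .

definition vanishing_mod :: "nat \<Rightarrow> 'a set" where
  "vanishing_mod t = {x \<in> carrier R. \<forall>i<s. \<phi> i x t = 0}"

definition residue_kernel :: "nat \<Rightarrow> 'a set" where
  "residue_kernel i = {x \<in> carrier R. \<phi> i x 1 = 0}"

text \<open>Multiplying x by a scalar multiplies all the values \<phi> i x by one and the same p-adic
  number; scalars are the coefficients allowed in lift_span below.\<close>
definition scalars :: "'a set" where
  "scalars = {a \<in> carrier R. \<forall>i<s. \<phi> i a = \<phi> 0 a}"

abbreviation pR :: 'a where
  "pR \<equiv> \<iota> (Zp_p p)"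

lemma vanishing_mod_ideal: "ideal (vanishing_mod t) R"
  by (rule idealI_closed) (auto simp: vanishing_mod_def \<phi>_zero_apply \<phi>_add_apply \<phi>_mult_apply)

lemma residue_kernel_ideal: "i < s \<Longrightarrow> ideal (residue_kernel i) R"
  by (rule idealI_closed) (auto simp: residue_kernel_def \<phi>_zero_apply \<phi>_add_apply \<phi>_mult_apply)

lemma vanishing_mod_0: "vanishing_mod 0 = carrier R"
proof -
  have "\<phi> i x 0 = 0" if "i < s" "x \<in> carrier R" for i x
    using Zp_apply_bounds[OF \<phi>_closed[OF that], of 0] by simp
  then show ?thesis
    by (auto simp: vanishing_mod_def)
qed

lemma vanishing_mod_mult:
  assumes "x \<in> vanishing_mod a" "y \<in> vanishing_mod b"
  shows "x \<otimes> y \<in> vanishing_mod (a + b)"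
proof -
  have "\<phi> i (x \<otimes> y) (a + b) = 0" if i: "i < s" for i
  proof -
    have "p ^ a dvd \<phi> i x (a + b)" "p ^ b dvd \<phi> i y (a + b)"
      using assms i Zp_apply_mod_le[OF \<phi>_closed, of i]
      by (auto simp: vanishing_mod_def dvd_eq_mod_eq_0)
    then have "p ^ (a + b) dvd \<phi> i x (a + b) * \<phi> i y (a + b)"
      by (simp add: power_add mult_dvd_mono)
    then show ?thesis
      using assms i by (simp add: vanishing_mod_def \<phi>_mult_apply dvd_eq_mod_eq_0)
  qed
  then show ?thesis
    using assms by (auto simp: vanishing_mod_def)
qed

lemma residue_kernel_inv_mod:
  assumes i: "i < s" and x: "x \<in> carrier R" "x \<notin> residue_kernel i"
  shows "\<exists>b\<in>carrier R. b \<otimes> x \<ominus> \<one> \<in> residue_kernel i"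
proof -
  have "0 \<le> \<phi> i x 1" "\<phi> i x 1 < p" "\<phi> i x 1 \<noteq> 0"
    using Zp_apply_bounds[OF \<phi>_closed[OF i x(1)], of 1] x by (auto simp: residue_kernel_def)
  then have "\<not> p dvd \<phi> i x 1"
    using zdvd_not_zless by fastforce
  then obtain d :: nat where d: "(int d * \<phi> i x 1) mod p = 1"
    using inverse_mod_prime[OF prime_p] by blast
  let ?b = "add_pow R d \<one>"
  have b: "?b \<in> carrier R"
    by simp
  have "\<phi> i (?b \<otimes> x \<ominus> \<one>) 1 = 0"
    using i x(1) d p_ge_2
    by (simp add: \<phi>_minus_apply \<phi>_mult_apply \<phi>_one_apply \<phi>_add_pow_one Zp_add_pow_one_apply
        mod_mult_left_eq mod_diff_left_eq)
  then show ?thesis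
    using b x(1) by (auto simp: residue_kernel_def)
qed

lemma residue_kernel_maximal: "i < s \<Longrightarrow> maximalideal (residue_kernel i) R"
  using p_ge_2 by (intro maximalidealI_inv_mod residue_kernel_ideal residue_kernel_inv_mod)
    (auto simp: residue_kernel_def \<phi>_one_apply)

lemma max_ideal_eq_residue_kernel: "i < s \<Longrightarrow> max_ideal R = residue_kernel i"
  using local_ring_max_ideal_unique[OF local_R residue_kernel_maximal] by simp

lemma vanishing_mod_1: "vanishing_mod 1 = max_ideal R"
  using max_ideal_eq_residue_kernel s_pos by (auto simp: vanishing_mod_def residue_kernel_def)

lemma scalars_mult:
  assumes "a \<in> scalars" "b \<in> scalars"
  shows "a \<otimes> b \<in> scalars"
proof -
  have ab: "a \<in> carrier R" "b \<in> carrier R"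
    using assms by (auto simp: scalars_def)
  have "\<phi> i (a \<otimes> b) = \<phi> 0 (a \<otimes> b)" if "i < s" for i
  proof -
    have "\<phi> i a = \<phi> 0 a" "\<phi> i b = \<phi> 0 b"
      using assms that unfolding scalars_def by blast+
    then show ?thesis
      using ring_hom_mult[OF \<phi>_hom[OF that] ab] ring_hom_mult[OF \<phi>_hom[OF s_pos] ab] by simp
  qed
  then show ?thesis
    using ab unfolding scalars_def by blast
qed

lemma one_in_scalars: "\<one> \<in> scalars"
  using ring_hom_one[OF \<phi>_hom] s_pos by (simp add: scalars_def)

lemma add_pow_one_in_scalars: "add_pow R (n::nat) \<one> \<in> scalars"
  using \<phi>_add_pow_one s_pos by (simp add: scalars_def)

lemma \<phi>_pR: "i < s \<Longrightarrow> \<phi> i pR = Zp_p p"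
  using ring_hom_ring.hom_add_pow_one[OF ring_hom_ringI2[OF Zp.ring_axioms ring_axioms \<iota>_hom]]
  by (simp add: Zp_p_eq_add_pow_one \<phi>_add_pow_one)

lemma pR_closed: "pR \<in> carrier R"
  using ring_hom_closed[OF \<iota>_hom Zp_p_closed] .

lemma pR_pow_in_scalars: "pR [^] (t::nat) \<in> scalars"
proof (induction t)
  case (Suc t)
  have "pR \<in> scalars"
    using \<phi>_pR s_pos pR_closed by (simp add: scalars_def)
  then show ?case
    using scalars_mult[OF Suc] by simp
qed (simp add: one_in_scalars)

lemma pR_pow_vanishing_mod: "pR [^] (t::nat) \<in> vanishing_mod t"
proof (induction t)
  case (Suc t)
  have "pR \<in> vanishing_mod 1"
    using \<phi>_pR pR_closed by (simp add: vanishing_mod_def Zp_p_def)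
  then show ?case
    using vanishing_mod_mult[OF Suc \<open>pR \<in> vanishing_mod 1\<close>] by simp
qed (simp add: vanishing_mod_0)

lemma exists_congruent_scalar:
  assumes x: "x \<in> carrier R"
  shows "\<exists>a\<in>scalars. x \<ominus> a \<in> max_ideal R"
proof -
  let ?a = "add_pow R (nat (\<phi> 0 x 1)) \<one>"
  have "0 \<le> \<phi> 0 x 1"
    using Zp_apply_bounds[OF \<phi>_closed[OF s_pos x]] by blast
  then have "\<phi> 0 (x \<ominus> ?a) 1 = 0"
    using s_pos x Zp_apply_mod[OF \<phi>_closed[OF s_pos x], of 1]
    by (simp add: \<phi>_minus_apply \<phi>_add_pow_one Zp_add_pow_one_apply)
  then have "x \<ominus> ?a \<in> max_ideal R"
    using x max_ideal_eq_residue_kernel[OF s_pos] by (simp add: residue_kernel_def)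
  then show ?thesis
    using add_pow_one_in_scalars by blast
qed

abbreviation A :: "'a set ring" where
  "A \<equiv> R Quot PIdl pR"

abbreviation proj :: "'a \<Rightarrow> 'a set" where
  "proj \<equiv> (+>) (PIdl pR)"

lemma max_ideal_R_ideal: "ideal (max_ideal R) R"
  using local_ring_max_ideal[OF local_R] by (rule maximalideal.axioms(1))

lemma pR_ideal: "ideal (PIdl pR) R"
  by (rule cgenideal_ideal[OF pR_closed])

lemma pR_ideal_subset: "PIdl pR \<subseteq> max_ideal R"
proof -
  have "pR \<in> max_ideal R"
    using pR_pow_vanishing_mod[of 1] vanishing_mod_1 pR_closed by simp
  then show ?thesis
    unfolding cgenideal_def
    using ideal.I_l_closed[OF max_ideal_R_ideal] by blast
qed

lemma local_A: "local_ring A"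
  and max_ideal_A: "max_ideal A = proj ` max_ideal R"
  using local_ring_quotient[OF local_R pR_ideal pR_ideal_subset] by simp_all

sublocale A: cring A
  using local_A by (simp add: local_ring_def)

lemma proj_hom: "proj \<in> ring_hom R A"
  by (rule ideal.rcos_ring_hom[OF pR_ideal])

lemma carrier_A: "carrier A = proj ` carrier R"
  by (rule FactRing_carrier)

lemma proj_closed: "x \<in> carrier R \<Longrightarrow> proj x \<in> carrier A"
  using carrier_A by blast

lemma proj_minus: "x \<in> carrier R \<Longrightarrow> y \<in> carrier R \<Longrightarrow> proj (x \<ominus> y) = proj x \<ominus>\<^bsub>A\<^esub> proj y"
  using ring_hom_cring.hom_a_inv[OF ideal.rcos_ring_hom_cring[OF pR_ideal is_cring]]
    ring_hom_add[OF proj_hom] by (simp add: minus_eq A.minus_eq)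

lemma proj_eq_iff: "x \<in> carrier R \<Longrightarrow> y \<in> carrier R \<Longrightarrow> proj x = proj y \<longleftrightarrow> x \<ominus> y \<in> PIdl pR"
  using quotient_eq_iff_same_a_r_cos[OF pR_ideal] by blast

lemma proj_mem_max_ideal_A_iff: "x \<in> carrier R \<Longrightarrow> proj x \<in> max_ideal A \<longleftrightarrow> x \<in> max_ideal R"
  unfolding max_ideal_A
  using quot_image_mem_iff[OF pR_ideal max_ideal_R_ideal pR_ideal_subset] .

lemma max_ideal_A_ideal: "ideal (max_ideal A) A"
  using local_ring_max_ideal[OF local_A] by (rule maximalideal.axioms(1))

lemma max_ideal_A_pow_subset: "ideal_power A (max_ideal A) k \<subseteq> proj ` vanishing_mod k"
proof (induction k)
  case 0
  then show ?case
    using carrier_A vanishing_mod_0 by simp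
next
  case (Suc k)
  have image_ideal: "ideal (proj ` vanishing_mod (Suc k)) A"
    by (rule ring_ideal_imp_quot_ideal[OF pR_ideal vanishing_mod_ideal])
  show ?case
  proof
    fix X assume "X \<in> ideal_power A (max_ideal A) (Suc k)"
    then show "X \<in> proj ` vanishing_mod (Suc k)"
      unfolding A.ideal_power_Suc
    proof (induction X rule: ideal_prod.induct)
      case (prod X Y)
      obtain x where x: "x \<in> vanishing_mod k" "X = proj x"
        using prod(1) Suc.IH by blast
      obtain y where y: "y \<in> max_ideal R" "Y = proj y"
        using prod(2) max_ideal_A by blast
      have "x \<otimes> y \<in> vanishing_mod (Suc k)"
        using vanishing_mod_mult[OF x(1), of y 1] y(1) vanishing_mod_1 by simp
      moreover have "X \<otimes>\<^bsub>A\<^esub> Y = proj (x \<otimes> y)"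
        using x y ring_hom_mult[OF proj_hom] ideal.Icarr[OF max_ideal_R_ideal y(1)]
        by (simp add: vanishing_mod_def)
      ultimately show ?case
        by blast
    next
      case (sum X Y)
      then show ?case
        using image_ideal by (simp add: ideal.axioms(1) additive_subgroup.a_closed)
    qed
  qed
qed

lemma max_ideal_A_pow_finite_span:
  obtains T where "finite T" "T \<subseteq> ideal_power A (max_ideal A) k"
    "\<And>X. X \<in> ideal_power A (max_ideal A) k \<Longrightarrow>
       \<exists>a\<in>T \<rightarrow> carrier A. X = (\<Oplus>\<^bsub>A\<^esub>t\<in>T. a t \<otimes>\<^bsub>A\<^esub> t)"
proof -
  let ?N = "ideal_power A (max_ideal A) k"
  have N: "ideal ?N A"
    by (rule A.ideal_power_ideal[OF max_ideal_A_ideal])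
  let ?G = "{x \<in> carrier R. proj x \<in> ?N}"
  have "ideal ?G R"
    by (rule ring_hom_ring.ideal_vimage[OF ideal.rcos_ring_hom_ring[OF pR_ideal] N])
  then obtain B where B: "B \<subseteq> carrier R" "finite B" "?G = Idl B"
    using noetherian_ring.finetely_gen[OF noetherian_R] by blast
  define T where "T = proj ` B"
  have T: "finite T" "T \<subseteq> ?N"
    using B genideal_self[OF B(1)] unfolding T_def by auto
  then have T_carr: "T \<subseteq> carrier A"
    using ideal.Icarr[OF N] by blast
  let ?span = "{X. \<exists>a\<in>T \<rightarrow> carrier A. X = (\<Oplus>\<^bsub>A\<^esub>t\<in>T. a t \<otimes>\<^bsub>A\<^esub> t)}"
  have "ideal {x \<in> carrier R. proj x \<in> ?span} R"
    by (rule ring_hom_ring.ideal_vimage[OF ideal.rcos_ring_hom_ring[OF pR_ideal]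
          A.lin_combs_ideal[OF T(1) T_carr]])
  moreover have "B \<subseteq> {x \<in> carrier R. proj x \<in> ?span}"
    using A.lin_combs_superset[OF T(1) T_carr] B(1) unfolding T_def by blast
  ultimately have "?G \<subseteq> {x \<in> carrier R. proj x \<in> ?span}"
    unfolding B(3) by (rule genideal_minimal)
  have "?N \<subseteq> ?span"
  proof
    fix X assume X: "X \<in> ?N"
    then obtain x where "x \<in> carrier R" "X = proj x"
      using ideal.Icarr[OF N] carrier_A by blast
    then show "X \<in> ?span"
      using X \<open>?G \<subseteq> {x \<in> carrier R. proj x \<in> ?span}\<close> by blast
  qed
  then show thesis
    by (intro that[OF T]) blast
qed

lemma graded_basis_exists: "\<exists>S. graded_basis A (max_ideal A) k S"
proof -
  let ?M = "max_ideal A"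
  obtain T where T: "finite T" "T \<subseteq> ideal_power A ?M k"
    and T_span: "\<And>X. X \<in> ideal_power A ?M k \<Longrightarrow>
      \<exists>a\<in>T \<rightarrow> carrier A. X = (\<Oplus>\<^bsub>A\<^esub>t\<in>T. a t \<otimes>\<^bsub>A\<^esub> t)"
    by (rule max_ideal_A_pow_finite_span[of k]) (rule that)
  have N: "ideal_power A ?M k \<subseteq> carrier A"
    using ideal.Icarr[OF A.ideal_power_ideal[OF max_ideal_A_ideal]] by (rule subsetI)
  have N': "ideal (ideal_power A ?M (Suc k)) A"
    by (rule A.ideal_power_ideal[OF max_ideal_A_ideal])
  have T_span': "\<exists>a\<in>T \<rightarrow> carrier A. X \<ominus>\<^bsub>A\<^esub> (\<Oplus>\<^bsub>A\<^esub>t\<in>T. a t \<otimes>\<^bsub>A\<^esub> t) \<in> ideal_power A ?M (Suc k)"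
    if X: "X \<in> ideal_power A ?M k" for X
  proof -
    obtain a where a: "a \<in> T \<rightarrow> carrier A" "X = (\<Oplus>\<^bsub>A\<^esub>t\<in>T. a t \<otimes>\<^bsub>A\<^esub> t)"
      using T_span X by blast
    have "X \<ominus>\<^bsub>A\<^esub> X = \<zero>\<^bsub>A\<^esub>"
      using X N by (simp add: subset_iff A.minus_eq A.r_neg)
    also have "\<dots> \<in> ideal_power A ?M (Suc k)"
      using ideal.axioms(1)[OF N'] by (rule additive_subgroup.zero_closed)
    finally show ?thesis
      using a by (intro bexI[of _ a]) simp_all
  qed
  obtain S where "S \<subseteq> T"
    and "\<forall>a\<in>S \<rightarrow> carrier A. (\<Oplus>\<^bsub>A\<^esub>s\<in>S. a s \<otimes>\<^bsub>A\<^esub> s) \<in> ideal_power A ?M (Suc k) \<longrightarrow> (\<forall>s\<in>S. a s \<in> ?M)"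
    and "\<forall>X\<in>ideal_power A ?M k. \<exists>a\<in>S \<rightarrow> carrier A.
           X \<ominus>\<^bsub>A\<^esub> (\<Oplus>\<^bsub>A\<^esub>s\<in>S. a s \<otimes>\<^bsub>A\<^esub> s) \<in> ideal_power A ?M (Suc k)"
    using A.exists_basis_mod[OF A.maximalideal_inv_mod[OF local_ring_max_ideal[OF local_A]] N' N
        A.ideal_power_mult[OF max_ideal_A_ideal] T T_span'] by blast
  then have "graded_basis A ?M k S"
    unfolding graded_basis_def using T finite_subset by blast
  then show ?thesis ..
qed

definition basis :: "nat \<Rightarrow> 'a set set" where
  "basis k = (SOME S. graded_basis A (max_ideal A) k S)"

lemma graded_basis_basis: "graded_basis A (max_ideal A) k (basis k)"
  unfolding basis_def using graded_basis_exists by (rule someI_ex)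

lemma card_basis: "card (basis k) = graded_dim A k"
  by (simp add: basis_def graded_dim_def)

lemma finite_basis: "finite (basis k)"
  and basis_subset: "basis k \<subseteq> ideal_power A (max_ideal A) k"
  using graded_basis_basis unfolding graded_basis_def by blast+

lemma basis_carrier: "e \<in> basis k \<Longrightarrow> e \<in> carrier A"
  using basis_subset ideal.Icarr[OF A.ideal_power_ideal[OF max_ideal_A_ideal]] by blast

lemma basis_span:
  "X \<in> ideal_power A (max_ideal A) k \<Longrightarrow> \<exists>a\<in>basis k \<rightarrow> carrier A.
     X \<ominus>\<^bsub>A\<^esub> (\<Oplus>\<^bsub>A\<^esub>e\<in>basis k. a e \<otimes>\<^bsub>A\<^esub> e) \<in> ideal_power A (max_ideal A) (Suc k)"
  using graded_basis_basis unfolding graded_basis_def by blast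

definition lift_index :: "nat \<Rightarrow> (nat \<times> 'a set) set" where
  "lift_index K = Sigma {..<K} basis"

definition lift :: "nat \<times> 'a set \<Rightarrow> 'a" where
  "lift q = (SOME y. y \<in> vanishing_mod (fst q) \<and> proj y = snd q)"

lemma finite_lift_index: "finite (lift_index K)"
  unfolding lift_index_def using finite_basis by auto

lemma lift_vanishing_mod: "e \<in> basis k \<Longrightarrow> lift (k, e) \<in> vanishing_mod k"
  and proj_lift: "e \<in> basis k \<Longrightarrow> proj (lift (k, e)) = e"
proof -
  assume "e \<in> basis k"
  then have "\<exists>y. y \<in> vanishing_mod k \<and> proj y = e"
    using basis_subset max_ideal_A_pow_subset by blast
  then have "lift (k, e) \<in> vanishing_mod k \<and> proj (lift (k, e)) = e"
    unfolding lift_def fst_conv snd_conv by (rule someI_ex)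
  then show "lift (k, e) \<in> vanishing_mod k" "proj (lift (k, e)) = e"
    by simp_all
qed

lemma lift_closed: "q \<in> lift_index K \<Longrightarrow> lift q \<in> carrier R"
  using lift_vanishing_mod by (auto simp: lift_index_def vanishing_mod_def)

definition lift_span :: "nat \<Rightarrow> 'a set" where
  "lift_span K = {x \<in> carrier R. \<exists>c. \<forall>i<s.
     \<phi> i x K = (\<Sum>q\<in>lift_index K. c q * \<phi> i (lift q) K) mod p ^ K}"

lemma lift_span_closed: "x \<in> lift_span K \<Longrightarrow> x \<in> carrier R"
  by (simp add: lift_span_def)

lemma vanishing_mod_subset_lift_span: "vanishing_mod K \<subseteq> lift_span K"
  by (auto simp: vanishing_mod_def lift_span_def intro: exI[of _ "\<lambda>_. 0"])

lemma zero_in_lift_span: "\<zero> \<in> lift_span K"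
  using vanishing_mod_subset_lift_span additive_subgroup.zero_closed[OF ideal.axioms(1)[OF vanishing_mod_ideal]]
  by blast

lemma lift_span_add:
  assumes x: "x \<in> lift_span K" and y: "y \<in> lift_span K"
  shows "x \<oplus> y \<in> lift_span K"
proof -
  obtain c where c: "\<And>i. i < s \<Longrightarrow> \<phi> i x K = (\<Sum>q\<in>lift_index K. c q * \<phi> i (lift q) K) mod p ^ K"
    using x unfolding lift_span_def by blast
  obtain d where d: "\<And>i. i < s \<Longrightarrow> \<phi> i y K = (\<Sum>q\<in>lift_index K. d q * \<phi> i (lift q) K) mod p ^ K"
    using y unfolding lift_span_def by blast
  have "\<phi> i (x \<oplus> y) K = (\<Sum>q\<in>lift_index K. (c q + d q) * \<phi> i (lift q) K) mod p ^ K"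
    if i: "i < s" for i
    using x y c[OF i] d[OF i] i
    by (simp add: lift_span_def \<phi>_add_apply mod_add_eq sum.distrib distrib_right)
  then show ?thesis
    using x y by (auto simp: lift_span_def)
qed

lemma lift_span_scalar_mult:
  assumes a: "a \<in> scalars" and y: "y \<in> lift_span K"
  shows "a \<otimes> y \<in> lift_span K"
proof -
  obtain c where c: "\<And>i. i < s \<Longrightarrow> \<phi> i y K = (\<Sum>q\<in>lift_index K. c q * \<phi> i (lift q) K) mod p ^ K"
    using y unfolding lift_span_def by blast
  have a_carr: "a \<in> carrier R"
    using a by (simp add: scalars_def)
  have "\<phi> i (a \<otimes> y) K = (\<Sum>q\<in>lift_index K. (\<phi> 0 a K * c q) * \<phi> i (lift q) K) mod p ^ K"
    if i: "i < s" for i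
  proof -
    have "\<phi> i a = \<phi> 0 a"
      using a i unfolding scalars_def by blast
    then show ?thesis
      using a_carr y c[OF i] i
      by (simp add: lift_span_def \<phi>_mult_apply mod_mult_right_eq sum_distrib_left mult.assoc)
  qed
  then show ?thesis
    using a_carr y by (auto simp: lift_span_def)
qed

lemma lift_in_lift_span:
  assumes q0: "q0 \<in> lift_index K"
  shows "lift q0 \<in> lift_span K"
proof -
  have "\<phi> i (lift q0) K = (\<Sum>q\<in>lift_index K. (if q = q0 then 1 else 0) * \<phi> i (lift q) K) mod p ^ K"
    if "i < s" for i
  proof -
    have "(\<Sum>q\<in>lift_index K. (if q = q0 then 1 else 0) * \<phi> i (lift q) K) =
        (\<Sum>q\<in>lift_index K. if q = q0 then \<phi> i (lift q) K else 0)"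
      by (rule sum.cong) auto
    also have "\<dots> = \<phi> i (lift q0) K"
      using q0 finite_lift_index by simp
    finally show ?thesis
      using Zp_apply_mod[OF \<phi>_closed[OF that lift_closed[OF q0]]] by simp
  qed
  then show ?thesis
    using lift_closed[OF q0] by (auto simp: lift_span_def)
qed

lemma lift_span_finsum:
  assumes "finite T" "\<And>e. e \<in> T \<Longrightarrow> \<sigma> e \<in> scalars" "\<And>e. e \<in> T \<Longrightarrow> g e \<in> lift_span K"
  shows "(\<Oplus>e\<in>T. \<sigma> e \<otimes> g e) \<in> lift_span K"
  using assms
proof (induction T rule: finite_induct)
  case (insert e T)
  have "\<sigma> e' \<otimes> g e' \<in> carrier R" if "e' \<in> insert e T" for e'
    using insert.prems[OF that] by (simp add: scalars_def lift_span_closed)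
  then show ?case
    using insert lift_span_add lift_span_scalar_mult by (simp add: Pi_iff)
qed (simp add: zero_in_lift_span)

lemma exists_scalar_representative:
  assumes "X \<in> carrier A"
  shows "\<exists>\<sigma>. \<sigma> \<in> scalars \<and> X \<ominus>\<^bsub>A\<^esub> proj \<sigma> \<in> max_ideal A"
proof -
  obtain x where x: "x \<in> carrier R" "X = proj x"
    using assms carrier_A by blast
  obtain \<sigma> where \<sigma>: "\<sigma> \<in> scalars" "x \<ominus> \<sigma> \<in> max_ideal R"
    using exists_congruent_scalar[OF x(1)] by blast
  have "\<sigma> \<in> carrier R"
    using \<sigma>(1) by (simp add: scalars_def)
  then have "X \<ominus>\<^bsub>A\<^esub> proj \<sigma> \<in> max_ideal A"
    using x \<sigma>(2) proj_mem_max_ideal_A_iff[of "x \<ominus> \<sigma>"] by (simp add: proj_minus)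
  then show ?thesis
    using \<sigma>(1) by blast
qed

lemma proj_lift_combination:
  assumes "\<And>e. e \<in> basis k \<Longrightarrow> \<sigma> e \<in> carrier R"
  shows "proj (\<Oplus>e\<in>basis k. \<sigma> e \<otimes> lift (k, e)) = (\<Oplus>\<^bsub>A\<^esub>e\<in>basis k. proj (\<sigma> e) \<otimes>\<^bsub>A\<^esub> e)"
proof -
  have lift_carr: "lift (k, e) \<in> carrier R" if "e \<in> basis k" for e
    using lift_vanishing_mod[OF that] by (simp add: vanishing_mod_def)
  have "proj (\<Oplus>e\<in>basis k. \<sigma> e \<otimes> lift (k, e)) = (\<Oplus>\<^bsub>A\<^esub>e\<in>basis k. proj (\<sigma> e \<otimes> lift (k, e)))"
    using ring_hom_cring.hom_finsum[OF ideal.rcos_ring_hom_cring[OF pR_ideal is_cring],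
        of "\<lambda>e. \<sigma> e \<otimes> lift (k, e)" "basis k"] assms lift_carr by (simp add: Pi_iff comp_def)
  also have "\<dots> = (\<Oplus>\<^bsub>A\<^esub>e\<in>basis k. proj (\<sigma> e) \<otimes>\<^bsub>A\<^esub> e)"
  proof (rule A.finsum_cong')
    show "(\<lambda>e. proj (\<sigma> e) \<otimes>\<^bsub>A\<^esub> e) \<in> basis k \<rightarrow> carrier A"
      using assms basis_carrier proj_closed by auto
  qed (use assms lift_carr proj_lift ring_hom_mult[OF proj_hom] in simp_all)
  finally show ?thesis .
qed

(* Replace each coordinate of proj x in the basis of m^k/m^(k+1) by a congruent scalar: the error
   lies in m^(k+1). *)
lemma lift_span_approx_step:
  assumes k: "k < K" and x: "x \<in> carrier R" "proj x \<in> ideal_power A (max_ideal A) k"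
  shows "\<exists>y\<in>lift_span K. proj (x \<ominus> y) \<in> ideal_power A (max_ideal A) (Suc k)"
proof -
  let ?N = "ideal_power A (max_ideal A)"
  have N: "ideal (?N (Suc k)) A"
    by (rule A.ideal_power_ideal[OF max_ideal_A_ideal])
  obtain a where a: "a \<in> basis k \<rightarrow> carrier A"
    and a_span: "proj x \<ominus>\<^bsub>A\<^esub> (\<Oplus>\<^bsub>A\<^esub>e\<in>basis k. a e \<otimes>\<^bsub>A\<^esub> e) \<in> ?N (Suc k)"
    using basis_span[OF x(2)] by blast
  have "\<forall>e\<in>basis k. \<exists>\<sigma>. \<sigma> \<in> scalars \<and> a e \<ominus>\<^bsub>A\<^esub> proj \<sigma> \<in> max_ideal A"
    using a exists_scalar_representative by blast
  then have "\<exists>\<sigma>. \<forall>e\<in>basis k. \<sigma> e \<in> scalars \<and> a e \<ominus>\<^bsub>A\<^esub> proj (\<sigma> e) \<in> max_ideal A"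
    by (rule bchoice)
  then obtain \<sigma> where \<sigma>_a: "\<forall>e\<in>basis k. \<sigma> e \<in> scalars \<and> a e \<ominus>\<^bsub>A\<^esub> proj (\<sigma> e) \<in> max_ideal A" ..
  then have \<sigma>: "\<sigma> e \<in> scalars" and a_\<sigma>: "a e \<ominus>\<^bsub>A\<^esub> proj (\<sigma> e) \<in> max_ideal A"
    if "e \<in> basis k" for e
    using that by simp_all
  have \<sigma>_carr: "\<sigma> e \<in> carrier R" if "e \<in> basis k" for e
    using \<sigma>[OF that] by (simp add: scalars_def)
  define y where "y = (\<Oplus>e\<in>basis k. \<sigma> e \<otimes> lift (k, e))"
  have y: "y \<in> lift_span K"
    unfolding y_def using k finite_basis
    by (intro lift_span_finsum \<sigma> lift_in_lift_span) (auto simp: lift_index_def)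
  have y_carr: "y \<in> carrier R"
    using y by (rule lift_span_closed)
  have proj_y: "proj y = (\<Oplus>\<^bsub>A\<^esub>e\<in>basis k. proj (\<sigma> e) \<otimes>\<^bsub>A\<^esub> e)"
    unfolding y_def by (rule proj_lift_combination[OF \<sigma>_carr])
  define D where "D = (\<Oplus>\<^bsub>A\<^esub>e\<in>basis k. (a e \<ominus>\<^bsub>A\<^esub> proj (\<sigma> e)) \<otimes>\<^bsub>A\<^esub> e)"
  have D: "D \<in> ?N (Suc k)"
    unfolding D_def using finite_basis basis_subset a_\<sigma>
    by (intro A.finsum_in_ideal[OF N]) (auto intro!: A.ideal_power_mult[OF max_ideal_A_ideal]
        simp: A.m_comm basis_carrier)
  have sum_eq: "(\<Oplus>\<^bsub>A\<^esub>e\<in>basis k. a e \<otimes>\<^bsub>A\<^esub> e) = D \<oplus>\<^bsub>A\<^esub> proj y"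
    unfolding D_def proj_y
    using a \<sigma>_carr proj_closed basis_carrier by (intro A.lin_comb_diff) auto
  have "proj (x \<ominus> y) = (proj x \<ominus>\<^bsub>A\<^esub> (\<Oplus>\<^bsub>A\<^esub>e\<in>basis k. a e \<otimes>\<^bsub>A\<^esub> e)) \<oplus>\<^bsub>A\<^esub> D"
    unfolding sum_eq proj_minus[OF x(1) y_carr]
    using proj_closed[OF x(1)] proj_closed[OF y_carr] ideal.Icarr[OF N D] by algebra
  also have "\<dots> \<in> ?N (Suc k)"
    using ideal.axioms(1)[OF N] a_span D by (rule additive_subgroup.a_closed)
  finally show ?thesis
    using y by blast
qed

lemma lift_span_approx:
  assumes x: "x \<in> carrier R" and "k \<le> K"
  shows "\<exists>y\<in>lift_span K. proj (x \<ominus> y) \<in> ideal_power A (max_ideal A) k"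
  using \<open>k \<le> K\<close>
proof (induction k)
  case 0
  have "proj (x \<ominus> \<zero>) \<in> carrier A"
    using x by (simp add: proj_closed)
  then show ?case
    using zero_in_lift_span by auto
next
  case (Suc k)
  then obtain y where y: "y \<in> lift_span K" "proj (x \<ominus> y) \<in> ideal_power A (max_ideal A) k"
    by auto
  have y_carr: "y \<in> carrier R"
    using y(1) by (rule lift_span_closed)
  obtain y' where y': "y' \<in> lift_span K" "proj ((x \<ominus> y) \<ominus> y') \<in> ideal_power A (max_ideal A) (Suc k)"
    using lift_span_approx_step[of k K "x \<ominus> y"] Suc.prems x y_carr y(2) by auto
  have "(x \<ominus> y) \<ominus> y' = x \<ominus> (y \<oplus> y')"
    using x y_carr lift_span_closed[OF y'(1)] by algebra
  then show ?case
    using y' lift_span_add[OF y(1) y'(1)] by auto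
qed

lemma lift_span_plus_pR_multiple:
  assumes x: "x \<in> carrier R"
  shows "\<exists>y\<in>lift_span K. \<exists>z\<in>carrier R. x = y \<oplus> z \<otimes> pR"
proof -
  obtain y where y: "y \<in> lift_span K" "proj (x \<ominus> y) \<in> ideal_power A (max_ideal A) K"
    using lift_span_approx[OF x order_refl] by blast
  have y_carr: "y \<in> carrier R"
    using y(1) by (rule lift_span_closed)
  obtain f where f: "f \<in> vanishing_mod K" "proj (x \<ominus> y) = proj f"
    using y(2) max_ideal_A_pow_subset by blast
  have f_carr: "f \<in> carrier R"
    using f(1) by (simp add: vanishing_mod_def)
  have "(x \<ominus> y) \<ominus> f \<in> PIdl pR"
    using f(2) proj_eq_iff[of "x \<ominus> y" f] x y_carr f_carr by simp
  then obtain z where z: "z \<in> carrier R" "(x \<ominus> y) \<ominus> f = z \<otimes> pR"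
    unfolding cgenideal_def by blast
  have "x = (y \<oplus> f) \<oplus> ((x \<ominus> y) \<ominus> f)"
    using x y_carr f_carr by algebra
  then have "x = (y \<oplus> f) \<oplus> z \<otimes> pR"
    by (simp only: z(2))
  moreover have "y \<oplus> f \<in> lift_span K"
    using y(1) f(1) vanishing_mod_subset_lift_span by (blast intro: lift_span_add)
  ultimately show ?thesis
    using z(1) by blast
qed

lemma lift_span_plus_pR_pow_multiple:
  assumes x: "x \<in> carrier R"
  shows "\<exists>y\<in>lift_span K. \<exists>z\<in>carrier R. x = y \<oplus> z \<otimes> pR [^] (t::nat)"
proof (induction t)
  case 0
  have "x = \<zero> \<oplus> x \<otimes> pR [^] (0::nat)"
    using x by simp
  then show ?case
    using zero_in_lift_span x by blast
next
  case (Suc t)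
  then obtain y z where y: "y \<in> lift_span K" and z: "z \<in> carrier R" "x = y \<oplus> z \<otimes> pR [^] t"
    by blast
  obtain y' z' where y': "y' \<in> lift_span K" and z': "z' \<in> carrier R" "z = y' \<oplus> z' \<otimes> pR"
    using lift_span_plus_pR_multiple[OF z(1)] by blast
  have "pR [^] t \<in> carrier R"
    using pR_closed by simp
  then have "x = (y \<oplus> pR [^] t \<otimes> y') \<oplus> z' \<otimes> (pR [^] t \<otimes> pR)"
    unfolding z(2) z'(2) using lift_span_closed[OF y] lift_span_closed[OF y'] z'(1) pR_closed
    by algebra
  then have "x = (y \<oplus> pR [^] t \<otimes> y') \<oplus> z' \<otimes> pR [^] Suc t"
    by simp
  moreover have "y \<oplus> pR [^] t \<otimes> y' \<in> lift_span K"
    using y y' pR_pow_in_scalars by (blast intro: lift_span_add lift_span_scalar_mult)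
  ultimately show ?case
    using z'(1) by blast
qed

lemma lift_span_eq_carrier: "lift_span K = carrier R"
proof
  show "carrier R \<subseteq> lift_span K"
  proof
    fix x assume "x \<in> carrier R"
    then obtain y z where "y \<in> lift_span K" "z \<in> carrier R" "x = y \<oplus> z \<otimes> pR [^] K"
      using lift_span_plus_pR_pow_multiple by blast
    moreover have "z \<otimes> pR [^] K \<in> lift_span K"
      using ideal.I_l_closed[OF vanishing_mod_ideal pR_pow_vanishing_mod \<open>z \<in> carrier R\<close>]
        vanishing_mod_subset_lift_span by blast
    ultimately show "x \<in> lift_span K"
      using lift_span_add by simp
  qed
qed (auto simp: lift_span_def)

lemma lift_index_level_card: "card {q \<in> lift_index K. fst q = k} \<le> graded_dim A k"
proof -
  have "{q \<in> lift_index K. fst q = k} \<subseteq> {k} \<times> basis k"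
    by (auto simp: lift_index_def)
  then have "card {q \<in> lift_index K. fst q = k} \<le> card ({k} \<times> basis k)"
    using finite_basis by (intro card_mono) auto
  then show ?thesis
    by (simp add: card_cartesian_product card_basis)
qed

lemma lift_dvd:
  assumes "q \<in> lift_index K" "i < s"
  shows "p ^ fst q dvd \<phi> i (lift q) K"
proof -
  obtain k e where q: "q = (k, e)" "k < K" "e \<in> basis k"
    using assms(1) by (auto simp: lift_index_def)
  then have "\<phi> i (lift q) k = 0" "lift q \<in> carrier R"
    using lift_vanishing_mod[OF q(3)] assms(2) by (auto simp: vanishing_mod_def)
  then show ?thesis
    using Zp_apply_mod_le[OF \<phi>_closed[OF assms(2)], of "lift q" k K] q by (simp add: dvd_eq_mod_eq_0)
qed

lemma det_mod_p_pow_A_sum: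
  assumes r: "\<And>j. j < s \<Longrightarrow> r j \<in> carrier R"
  shows "det (mat s s (\<lambda>(i, j). \<phi> i (r j) (A_sum A s))) mod p ^ A_sum A s = 0"
proof -
  define K where "K = A_sum A s"
  have "\<forall>j. \<exists>c. j < s \<longrightarrow> (\<forall>i<s. \<phi> i (r j) K = (\<Sum>q\<in>lift_index K. c q * \<phi> i (lift q) K) mod p ^ K)"
    using r lift_span_eq_carrier unfolding lift_span_def by blast
  then obtain C where C: "\<And>j i. j < s \<Longrightarrow> i < s \<Longrightarrow>
      \<phi> i (r j) K = (\<Sum>q\<in>lift_index K. C j q * \<phi> i (lift q) K) mod p ^ K"
    by metis
  define w where "w q = vec s (\<lambda>i. \<phi> i (lift q) K)" for q
  define B where "B = mat s s (\<lambda>(j, i). \<Sum>q\<in>lift_index K. C j q * w q $ i)"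
  have "p ^ (\<Sum>i=1..s. LEAST k. i \<le> (\<Sum>j\<le>k. graded_dim A j)) dvd det B"
    unfolding B_def using finite_lift_index lift_index_level_card lift_dvd
    by (intro det_rows_level_span_dvd) (auto simp: w_def simp del: prod.collapse intro: lift_dvd)
  then have "det B mod p ^ K = 0"
    by (simp add: K_def A_sum_def n_seq_def)
  moreover have "transpose_mat (mat s s (\<lambda>(j, i). \<phi> i (r j) K)) = mat s s (\<lambda>(i, j). \<phi> i (r j) K)"
    by (rule eq_matI) auto
  then have "det (mat s s (\<lambda>(i, j). \<phi> i (r j) K)) = det (mat s s (\<lambda>(j, i). \<phi> i (r j) K))"
    using det_transpose[of "mat s s (\<lambda>(j, i). \<phi> i (r j) K)" s] by simp
  moreover have "det (mat s s (\<lambda>(j, i). \<phi> i (r j) K)) mod p ^ K = det B mod p ^ K"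
    unfolding B_def using C by (intro det_mod_eq) (auto simp: w_def)
  ultimately show ?thesis
    by (simp add: K_def)
qed

lemma A_sum_divides_det:
  assumes r: "\<And>j. j < s \<Longrightarrow> r j \<in> carrier R"
  shows "(Zp_p p [^]\<^bsub>Zp p\<^esub> A_sum A s) divides\<^bsub>Zp p\<^esub> ring_det (Zp p) s (\<lambda>i j. \<phi> i (r j))"
proof -
  have entries: "\<phi> i (r j) \<in> carrier (Zp p)" if "i < s" "j < s" for i j
    using that r \<phi>_closed by blast
  then have "ring_det (Zp p) s (\<lambda>i j. \<phi> i (r j)) (A_sum A s) = 0"
    using Zp_ring_det_apply det_mod_p_pow_A_sum[OF r] by simp
  then show ?thesis
    using entries by (intro Zp_p_pow_divides Zp.ring_det_closed)
qed

end

theorem lemma2p4: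
  fixes R :: "('a, 'b) ring_scheme" and p :: int and \<iota> :: "(nat \<Rightarrow> int) \<Rightarrow> 'a"
    and s :: nat and r :: "nat \<Rightarrow> 'a" and \<phi> :: "nat \<Rightarrow> 'a \<Rightarrow> (nat \<Rightarrow> int)"
  assumes "Factorial_Ring.prime p"
    and "local_ring R" and "noetherian_ring R"
    and "\<iota> \<in> ring_hom (Zp p) R" and "inj_on \<iota> (carrier (Zp p))"
    and "n_seq_has (R Quot (PIdl\<^bsub>R\<^esub> (\<iota> (Zp_p p)))) s"
    and "\<forall>j<s. r j \<in> carrier R"
    and "\<forall>i<s. \<phi> i \<in> ring_hom R (Zp p)"
  shows "(Zp_p p [^]\<^bsub>Zp p\<^esub> A_sum (R Quot (PIdl\<^bsub>R\<^esub> (\<iota> (Zp_p p)))) s)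
           divides\<^bsub>Zp p\<^esub> ring_det (Zp p) s (\<lambda>i j. \<phi> i (r j))"
proof (cases "s = 0")
  case True
  interpret padic p
    using assms(1) prime_ge_2_int by unfold_locales blast
  have "ring_det (Zp p) s (\<lambda>i j. \<phi> i (r j)) \<in> carrier (Zp p)"
    using True by (intro Zp.ring_det_closed) auto
  then show ?thesis
    using True by (simp add: A_sum_def Zp.unit_divides)
next
  case False
  then have "Zp_points p R \<iota> s \<phi>"
    using assms unfolding Zp_points_def by auto
  then interpret Zp_points p R \<iota> s \<phi> .
  show ?thesis
    using A_sum_divides_det assms(7) by blast
qed

end
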